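(* Let $\Sigma$ be a non-empty finite or countably infinite alphabet and let $\nu$ be a shift-invariant probability measure on the full shift $(\Sigma^\omega,s)$ such that there exists at least one $\alpha\in\Sigma^\omega$ generic for $\nu$. Then every finite-state selector preserves genericity for $\nu$ (i.e. for every DFA $A$ over $\Sigma$ and every $\alpha$ generic for $\nu$, if $A[\alpha]$ is infinite then $A[\alpha]$ is generic for $\nu$) if and only if $\nu$ is a Bernoulli measure for which every word in $\Sigma^*$ is admissible.
   Context: The shift is $s(a_1a_2\cdots)=a_2a_3\cdots$; cylinders $[w]=\{w\beta:\beta\in\Sigma^\omega\}$ generate the $\sigma$-algebra; $\nu$ is shift-invariant if $\nu(s^{-1}(E))=\nu(E)$ for all measurable $E$. $\nu$ is a Bernoulli measure if there is $p:\Sigma\to[0,1]$ with $\sum_ap(a)=1$ and $\nu([a_1\cdots a_n])=\prod_ip(a_i)$. A word $w$ is admissible for $\nu$ if $\nu([w])>0$. $\alpha\in\Sigma^\omega$ is generic for $\nu$ if for every admissible $w$, $\lim_N\#_w(\alpha|_{\le N})/N=\nu([w])$, where $\#_w(v)$ counts occurrences of $w$ as a contiguous block in $v$ and $\alpha|_{\le N}$ is the length-$N$ prefix. A DFA $A=(Q,\Sigma,\delta,q_s,F)$ has finitely many states and total $\delta$; $A[\alpha]$ is the subsequence of those $\alpha_i$ with $\delta^*(q_s,\alpha_1\cdots\alpha_{i-1})\in F$. *)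

theory Defs
  imports "HOL-Probability.Probability" "HOL-Library.Infinite_Set"
begin

text \<open>Infinite words over an alphabet 'a are functions nat => 'a (alpha 0 is the first letter).\<close>

definition cyl :: "'a list \<Rightarrow> (nat \<Rightarrow> 'a) set" where
  "cyl w = {\<beta>. \<forall>i<length w. \<beta> i = w ! i}"

definition shift :: "(nat \<Rightarrow> 'a) \<Rightarrow> (nat \<Rightarrow> 'a)" where
  "shift \<alpha> = (\<lambda>i. \<alpha> (Suc i))"

definition cylinder_measure :: "(nat \<Rightarrow> 'a) measure \<Rightarrow> bool" where
  "cylinder_measure \<nu> \<longleftrightarrow> space \<nu> = UNIV \<and> sets \<nu> = sigma_sets UNIV (range cyl)"

definition shift_invariant :: "(nat \<Rightarrow> 'a) measure \<Rightarrow> bool" where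
  "shift_invariant \<nu> \<longleftrightarrow> (\<forall>E\<in>sets \<nu>. emeasure \<nu> (shift -` E) = emeasure \<nu> E)"

definition bernoulli_measure :: "(nat \<Rightarrow> 'a) measure \<Rightarrow> bool" where
  "bernoulli_measure \<nu> \<longleftrightarrow> (\<exists>p :: 'a \<Rightarrow> real. (\<forall>a. 0 \<le> p a \<and> p a \<le> 1) \<and> (p has_sum 1) UNIV \<and>
      (\<forall>w. measure \<nu> (cyl w) = prod_list (map p w)))"

definition admissible :: "(nat \<Rightarrow> 'a) measure \<Rightarrow> 'a list \<Rightarrow> bool" where
  "admissible \<nu> w \<longleftrightarrow> measure \<nu> (cyl w) > 0"

definition occ :: "'a list \<Rightarrow> 'a list \<Rightarrow> nat" where
  "occ w v = card {i. i + length w \<le> length v \<and> take (length w) (drop i v) = w}"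

definition prefix_of :: "(nat \<Rightarrow> 'a) \<Rightarrow> nat \<Rightarrow> 'a list" where
  "prefix_of \<alpha> N = map \<alpha> [0..<N]"

definition generic :: "(nat \<Rightarrow> 'a) measure \<Rightarrow> (nat \<Rightarrow> 'a) \<Rightarrow> bool" where
  "generic \<nu> \<alpha> \<longleftrightarrow> (\<forall>w. admissible \<nu> w \<longrightarrow>
      ((\<lambda>N. real (occ w (prefix_of \<alpha> N)) / real N) \<longlonglongrightarrow> measure \<nu> (cyl w)))"

text \<open>A DFA with state set Q (a finite set of naturals, w.l.o.g.), total transition
  function delta on Q, start state qs and final states F.\<close>
definition is_dfa :: "nat set \<Rightarrow> (nat \<Rightarrow> 'a \<Rightarrow> nat) \<Rightarrow> nat \<Rightarrow> nat set \<Rightarrow> bool" where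
  "is_dfa Q \<delta> qs F \<longleftrightarrow> finite Q \<and> qs \<in> Q \<and> F \<subseteq> Q \<and> (\<forall>q\<in>Q. \<forall>a. \<delta> q a \<in> Q)"

fun run :: "(nat \<Rightarrow> 'a \<Rightarrow> nat) \<Rightarrow> nat \<Rightarrow> (nat \<Rightarrow> 'a) \<Rightarrow> nat \<Rightarrow> nat" where
  "run \<delta> qs \<alpha> 0 = qs"
| "run \<delta> qs \<alpha> (Suc i) = \<delta> (run \<delta> qs \<alpha> i) (\<alpha> i)"

definition selected :: "(nat \<Rightarrow> 'a \<Rightarrow> nat) \<Rightarrow> nat \<Rightarrow> nat set \<Rightarrow> (nat \<Rightarrow> 'a) \<Rightarrow> nat set" where
  "selected \<delta> qs F \<alpha> = {i. run \<delta> qs \<alpha> i \<in> F}"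

text \<open>A[alpha], meaningful when the selected index set is infinite.\<close>
definition select :: "(nat \<Rightarrow> 'a \<Rightarrow> nat) \<Rightarrow> nat \<Rightarrow> nat set \<Rightarrow> (nat \<Rightarrow> 'a) \<Rightarrow> (nat \<Rightarrow> 'a)" where
  "select \<delta> qs F \<alpha> = \<alpha> \<circ> enumerate (selected \<delta> qs F \<alpha>)"

end

theory Submission
  imports Defs "HOL-Library.Nat_Bijection" "HOL-Real_Asymp.Real_Asymp"
begin

text \<open>
  If \<open>\<nu>\<close> is Bernoulli with positive letter probabilities, we show by induction on \<open>u\<close> that
  every word \<open>u x\<close> has the right frequency in the selected subsequence. An automaton that
  runs the selector together with a tracker of the overlaps of \<open>u\<close> with the selected
  prefix marks the selected positions that complete an occurrence of \<open>u\<close>; the next letter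
  there is \<open>x\<close> with conditional frequency \<open>p x\<close>, by a law of large numbers for
  automata driven by a generic sequence. As the selected positions have positive lower
  density, the conditional frequency transfers to the selected subsequence.

  Conversely, selecting the letters after occurrences of \<open>w\<close> shows
  \<open>\<nu>[w a] = \<nu>[w] \<nu>[a]\<close> whenever \<open>\<nu>[a] > 0\<close>. A letter \<open>b\<close> with \<open>\<nu>[b] = 0\<close> could be
  planted along a density-zero set so that the letters following \<open>b\<close> form a generic
  sequence in which every other letter is \<open>b\<close>, contradicting \<open>\<nu>[c c] = \<nu>[c]\<^sup>2 > 0\<close>.
\<close>

section \<open>Windows, occurrence counts and counting functions\<close>

definition window :: "(nat \<Rightarrow> 'a) \<Rightarrow> nat \<Rightarrow> nat \<Rightarrow> 'a list" where
  "window \<alpha> i n = map \<alpha> [i..<i+n]"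

lemma length_window [simp]: "length (window \<alpha> i n) = n"
  by (simp add: window_def)

lemma window_0 [simp]: "window \<alpha> i 0 = []"
  by (simp add: window_def)

lemma window_Suc: "window \<alpha> i (Suc n) = \<alpha> i # window \<alpha> (Suc i) n"
  by (simp add: window_def upt_conv_Cons del: upt_Suc)

lemma window_snoc: "window \<alpha> i (Suc n) = window \<alpha> i n @ [\<alpha> (i+n)]"
  by (simp add: window_def)

lemma take_window: "d \<le> n \<Longrightarrow> take d (window \<alpha> i n) = window \<alpha> i d"
  by (simp add: window_def take_map take_upt)

lemma prefix_of_Suc: "prefix_of \<beta> (Suc m) = prefix_of \<beta> m @ [\<beta> m]"
  by (simp add: prefix_of_def)

lemma occ_prefix_of:
  "occ w (prefix_of \<alpha> N) = card {i. i + length w \<le> N \<and> window \<alpha> i (length w) = w}"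
  unfolding occ_def prefix_of_def window_def
  by (intro arg_cong[where f=card]) (auto simp: take_map drop_map take_upt)

lemma occ_Nil_prefix_of: "occ [] (prefix_of \<beta> M) = Suc M"
proof -
  have "{i. i \<le> M} = {..M}" by auto
  then show ?thesis by (simp add: occ_prefix_of)
qed

lemma occ_singleton_prefix_of: "occ [a] (prefix_of \<alpha> N) = card {t. t < N \<and> \<alpha> t = a}"
  by (simp add: occ_prefix_of window_def) (metis Suc_le_eq)

lemma occ_prefix_of_le_card_starts:
  "occ w (prefix_of \<alpha> N) \<le> card {i. i < N \<and> window \<alpha> i (length w) = w} + 1"
proof -
  have "{i. i + length w \<le> N \<and> window \<alpha> i (length w) = w}
      \<subseteq> insert N {i. i < N \<and> window \<alpha> i (length w) = w}"
    by auto
  then have "card {i. i + length w \<le> N \<and> window \<alpha> i (length w) = w}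
      \<le> card (insert N {i. i < N \<and> window \<alpha> i (length w) = w})"
    by (intro card_mono) auto
  also have "\<dots> \<le> card {i. i < N \<and> window \<alpha> i (length w) = w} + 1"
    by (simp add: card_insert_if)
  finally show ?thesis by (simp add: occ_prefix_of)
qed

lemma window_eq_snoc_iff:
  "window \<alpha> i (Suc (length w)) = w @ [b] \<longleftrightarrow> window \<alpha> i (length w) = w \<and> \<alpha> (i + length w) = b"
  by (simp add: window_snoc)

lemma sum_occ_snoc_prefix_of_le:
  assumes "finite A"
  shows "(\<Sum>b\<in>A. occ (w @ [b]) (prefix_of \<alpha> N)) \<le> occ w (prefix_of \<alpha> N)"
proof -
  define Occ where
    "Occ b = {i. i + length (w @ [b]) \<le> N \<and> window \<alpha> i (length (w @ [b])) = w @ [b]}" for b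
  have "(\<Sum>b\<in>A. occ (w @ [b]) (prefix_of \<alpha> N)) = (\<Sum>b\<in>A. card (Occ b))"
    by (simp add: occ_prefix_of Occ_def)
  also have "\<dots> = card (\<Union>b\<in>A. Occ b)"
    by (rule card_UN_disjoint'[symmetric])
       (auto simp: assms Occ_def disjoint_family_on_def window_eq_snoc_iff
         intro: finite_subset[of _ "{..N}"])
  also have "\<dots> \<le> card {i. i + length w \<le> N \<and> window \<alpha> i (length w) = w}"
    by (intro card_mono) (auto simp: Occ_def window_eq_snoc_iff intro: finite_subset[of _ "{..N}"])
  finally show ?thesis by (simp add: occ_prefix_of)
qed

lemma occ_snoc_prefix_of_le: "occ (w @ [a]) (prefix_of \<alpha> N) \<le> occ w (prefix_of \<alpha> N)"
  using sum_occ_snoc_prefix_of_le[of "{a}" w \<alpha> N] by simp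

lemma card_shifted_le: "card {i. i + d \<in> D} \<le> card (D :: nat set)" if "finite D"
proof -
  have "card {i. i + d \<in> D} = card ((\<lambda>i. i + d) ` {i. i + d \<in> D})"
    by (rule card_image[symmetric]) (auto simp: inj_on_def)
  also have "\<dots> \<le> card D" by (intro card_mono that) auto
  finally show ?thesis .
qed

lemma card_UN_shifted_le:
  assumes "finite D"
  shows "card (\<Union>d\<in>{..<k}. {i. i + d \<in> D}) \<le> k * card (D :: nat set)"
proof -
  have "card (\<Union>d\<in>{..<k}. {i. i + d \<in> D}) \<le> (\<Sum>d<k. card {i. i + d \<in> D})"
    by (rule card_UN_le) simp
  also have "\<dots> \<le> (\<Sum>d<k. card D)" by (intro sum_mono card_shifted_le assms)
  finally show ?thesis by simp
qed

lemma occ_prefix_of_change_le: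
  "occ w (prefix_of \<alpha>' N) \<le> occ w (prefix_of \<alpha> N) + length w * card {t. t < N \<and> \<alpha>' t \<noteq> \<alpha> t}"
proof -
  define D where "D = {t. t < N \<and> \<alpha>' t \<noteq> \<alpha> t}"
  define A where "A \<alpha> = {i. i + length w \<le> N \<and> window \<alpha> i (length w) = w}" for \<alpha>
  define X where "X = {i. i + length w \<le> N \<and> window \<alpha>' i (length w) \<noteq> window \<alpha> i (length w)}"
  have "X \<subseteq> (\<Union>d\<in>{..<length w}. {i. i + d \<in> D})"
  proof
    fix i assume "i \<in> X"
    then have i: "i + length w \<le> N" "map \<alpha>' [i..<i + length w] \<noteq> map \<alpha> [i..<i + length w]"
      by (auto simp: X_def window_def)
    then obtain t where "t \<in> set [i..<i + length w]" "\<alpha>' t \<noteq> \<alpha> t"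
      unfolding map_eq_conv by blast
    then show "i \<in> (\<Union>d\<in>{..<length w}. {i. i + d \<in> D})"
      using i(1) by (auto simp: D_def intro!: bexI[of _ "t - i"])
  qed
  moreover have "finite (\<Union>d\<in>{..<length w}. {i. i + d \<in> D})"
    by (auto simp: D_def intro: finite_subset[of _ "{..<N}"])
  ultimately have "card X \<le> card (\<Union>d\<in>{..<length w}. {i. i + d \<in> D})"
    by (rule card_mono[rotated])
  also have "\<dots> \<le> length w * card D"
    by (rule card_UN_shifted_le) (simp add: D_def)
  finally have X: "card X \<le> length w * card D" .
  have "A \<alpha>' \<subseteq> A \<alpha> \<union> X"
    by (auto simp: A_def X_def)
  then have "card (A \<alpha>') \<le> card (A \<alpha> \<union> X)"
    by (rule card_mono[rotated]) (auto simp: A_def X_def intro: finite_subset[of _ "{..N}"])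
  also have "\<dots> \<le> card (A \<alpha>) + card X"
    by (rule card_Un_le)
  finally show ?thesis
    using X by (simp add: occ_prefix_of A_def D_def)
qed

definition count_below :: "(nat \<Rightarrow> bool) \<Rightarrow> nat \<Rightarrow> nat" where
  "count_below P N = card {t. t < N \<and> P t}"

lemma count_below_0 [simp]: "count_below P 0 = 0"
  by (simp add: count_below_def)

lemma count_below_Suc: "count_below P (Suc N) = count_below P N + (if P N then 1 else 0)"
proof -
  have "{t. t < Suc N \<and> P t} = {t. t < N \<and> P t} \<union> (if P N then {N} else {})"
    by (auto simp: less_Suc_eq)
  then show ?thesis unfolding count_below_def by (auto simp: card_insert_if)
qed

lemma count_below_mono: "M \<le> N \<Longrightarrow> count_below P M \<le> count_below P N"
  unfolding count_below_def by (intro card_mono) auto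

lemma count_below_add_le: "count_below P (N + k) \<le> count_below P N + k"
  by (induct k) (auto simp: count_below_Suc)

lemma sum_indicator_eq_count_below: "(\<Sum>t<N. if P t then (1::real) else 0) = real (count_below P N)"
  by (induct N) (auto simp: count_below_Suc)

lemma card_starts_le_count_below:
  assumes "\<And>i. window \<alpha> i k = V \<Longrightarrow> \<exists>d\<le>k. P (i + d)"
  shows "card {i. i < N \<and> window \<alpha> i k = V} \<le> Suc k * count_below P (N + k)"
proof -
  define T where "T = {t. t < N + k \<and> P t}"
  have "{i. i < N \<and> window \<alpha> i k = V} \<subseteq> (\<Union>d\<in>{..<Suc k}. {i. i + d \<in> T})"
    using assms unfolding T_def by fastforce
  moreover have "finite (\<Union>d\<in>{..<Suc k}. {i. i + d \<in> T})"
    by (auto simp: T_def intro: finite_subset[of _ "{..<N+k}"])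
  ultimately have "card {i. i < N \<and> window \<alpha> i k = V} \<le> card (\<Union>d\<in>{..<Suc k}. {i. i + d \<in> T})"
    by (rule card_mono[rotated])
  also have "\<dots> \<le> Suc k * card T"
    by (rule card_UN_shifted_le) (simp add: T_def)
  finally show ?thesis
    by (simp add: count_below_def T_def)
qed

context
  fixes S :: "nat set"
  assumes S: "infinite S"
begin

lemma count_below_enumerate: "count_below (\<lambda>t. t \<in> S) (enumerate S m) = m"
proof -
  have "{t. t < enumerate S m \<and> t \<in> S} = enumerate S ` {..<m}"
  proof
    show "{t. t < enumerate S m \<and> t \<in> S} \<subseteq> enumerate S ` {..<m}"
    proof
      fix t assume t: "t \<in> {t. t < enumerate S m \<and> t \<in> S}"
      obtain k where "enumerate S k = t" using enumerate_Ex[OF S] t by blast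
      with t S show "t \<in> enumerate S ` {..<m}" by auto
    qed
  qed (auto simp: S enumerate_in_set)
  then show ?thesis
    unfolding count_below_def using S by (simp add: card_image inj_on_subset[OF inj_enumerate])
qed

lemma enumerate_count_below: "t \<in> S \<Longrightarrow> enumerate S (count_below (\<lambda>t. t \<in> S) t) = t"
  using enumerate_Ex[OF S, of t] count_below_enumerate by auto

lemma enumerate_less_iff_count_below: "enumerate S m < N \<longleftrightarrow> m < count_below (\<lambda>t. t \<in> S) N"
proof
  assume "enumerate S m < N"
  then have "count_below (\<lambda>t. t \<in> S) (Suc (enumerate S m)) \<le> count_below (\<lambda>t. t \<in> S) N"
    by (intro count_below_mono) simp
  then show "m < count_below (\<lambda>t. t \<in> S) N"
    using count_below_enumerate[of m] enumerate_in_set[OF S, of m] by (simp add: count_below_Suc)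
next
  assume m: "m < count_below (\<lambda>t. t \<in> S) N"
  show "enumerate S m < N"
  proof (rule ccontr)
    assume "\<not> enumerate S m < N"
    then have "count_below (\<lambda>t. t \<in> S) N \<le> count_below (\<lambda>t. t \<in> S) (enumerate S m)"
      by (intro count_below_mono) simp
    then show False using m count_below_enumerate[of m] by simp
  qed
qed

lemma card_below_enumerate_reindex:
  "card {t. t < N \<and> t \<in> S \<and> R (count_below (\<lambda>t. t \<in> S) t) (\<alpha> t)}
     = card {m. m < count_below (\<lambda>t. t \<in> S) N \<and> R m ((\<alpha> \<circ> enumerate S) m)}"
proof -
  have "{t. t < N \<and> t \<in> S \<and> R (count_below (\<lambda>t. t \<in> S) t) (\<alpha> t)}
      = enumerate S ` {m. m < count_below (\<lambda>t. t \<in> S) N \<and> R m ((\<alpha> \<circ> enumerate S) m)}"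
  proof
    show "{t. t < N \<and> t \<in> S \<and> R (count_below (\<lambda>t. t \<in> S) t) (\<alpha> t)}
      \<subseteq> enumerate S ` {m. m < count_below (\<lambda>t. t \<in> S) N \<and> R m ((\<alpha> \<circ> enumerate S) m)}"
    proof
      fix t assume "t \<in> {t. t < N \<and> t \<in> S \<and> R (count_below (\<lambda>t. t \<in> S) t) (\<alpha> t)}"
      then have t: "t < N" "t \<in> S" "R (count_below (\<lambda>t. t \<in> S) t) (\<alpha> t)" by auto
      have e: "enumerate S (count_below (\<lambda>t. t \<in> S) t) = t" using enumerate_count_below[OF t(2)] .
      then have "count_below (\<lambda>t. t \<in> S) t < count_below (\<lambda>t. t \<in> S) N"
        using enumerate_less_iff_count_below t(1) by metis
      then show "t \<in> enumerate S ` {m. m < count_below (\<lambda>t. t \<in> S) N \<and> R m ((\<alpha> \<circ> enumerate S) m)}"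
        using e t(3) by (intro image_eqI[of _ _ "count_below (\<lambda>t. t \<in> S) t"]) auto
    qed
  qed (use S enumerate_less_iff_count_below in \<open>auto simp: enumerate_in_set count_below_enumerate\<close>)
  then show ?thesis
    using S by (simp add: card_image inj_on_subset[OF inj_enumerate])
qed

lemma filterlim_count_below: "filterlim (count_below (\<lambda>t. t \<in> S)) at_top sequentially"
  unfolding filterlim_at_top
proof
  fix K
  show "eventually (\<lambda>N. K \<le> count_below (\<lambda>t. t \<in> S) N) sequentially"
  proof (rule eventually_sequentiallyI)
    fix N assume "Suc (enumerate S K) \<le> N"
    then show "K \<le> count_below (\<lambda>t. t \<in> S) N"
      using enumerate_less_iff_count_below[of K N] by simp
  qed
qed

lemma tendsto_compose_count_below:
  "f \<longlonglongrightarrow> L \<Longrightarrow> (\<lambda>N. f (count_below (\<lambda>t. t \<in> S) N)) \<longlonglongrightarrow> L"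
  by (rule filterlim_compose[OF _ filterlim_count_below])

lemma tendsto_of_compose_count_below:
  assumes "(\<lambda>N. f (count_below (\<lambda>t. t \<in> S) N)) \<longlonglongrightarrow> L"
  shows "f \<longlonglongrightarrow> L"
proof -
  have "((\<lambda>N. f (count_below (\<lambda>t. t \<in> S) N)) \<circ> enumerate S) \<longlonglongrightarrow> L"
    by (rule LIMSEQ_subseq_LIMSEQ[OF assms strict_mono_enumerate[OF S]])
  then show ?thesis
    by (simp add: o_def count_below_enumerate)
qed

end

section \<open>Runs of automata and overlap tracking\<close>

text \<open>Like \<^const>\<open>run\<close>, but polymorphic in the state type, so that product automata
  need no encoding of their states into \<^typ>\<open>nat\<close>.\<close>
fun run_from :: "('s \<Rightarrow> 'a \<Rightarrow> 's) \<Rightarrow> 's \<Rightarrow> (nat \<Rightarrow> 'a) \<Rightarrow> nat \<Rightarrow> 's" where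
  "run_from \<delta> q \<alpha> 0 = q"
| "run_from \<delta> q \<alpha> (Suc i) = \<delta> (run_from \<delta> q \<alpha> i) (\<alpha> i)"

lemma run_eq_run_from: "run \<delta> q \<alpha> t = run_from \<delta> q \<alpha> t"
  by (induct t) auto

lemma selected_eq: "selected \<delta> qs F \<alpha> = {t. run_from \<delta> qs \<alpha> t \<in> F}"
  by (simp add: selected_def run_eq_run_from)

lemma run_from_add: "run_from \<delta> q \<alpha> (t + j) = foldl \<delta> (run_from \<delta> q \<alpha> t) (window \<alpha> t j)"
  by (induct j) (auto simp: window_snoc)

lemma run_from_in: "q \<in> Q \<Longrightarrow> (\<And>s a. s \<in> Q \<Longrightarrow> \<delta> s a \<in> Q) \<Longrightarrow> run_from \<delta> q \<alpha> t \<in> Q"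
  by (induct t) auto

lemma exists_word_reaching_or_leaving:
  fixes \<delta> :: "'s \<Rightarrow> 'a \<Rightarrow> 's"
  assumes "finite A" and live: "\<And>q. q \<in> L \<Longrightarrow> \<exists>v. foldl \<delta> q v \<in> F"
  shows "\<exists>V. \<forall>q\<in>A. \<exists>j\<le>length V. foldl \<delta> q (take j V) \<in> F \<or> foldl \<delta> q (take j V) \<notin> L"
  using assms(1)
proof (induct A rule: finite_induct)
  case empty then show ?case by auto
next
  case (insert q A)
  let ?good = "\<lambda>V r. \<exists>j\<le>length V. foldl \<delta> r (take j V) \<in> F \<or> foldl \<delta> r (take j V) \<notin> L"
  obtain V where V: "\<forall>r\<in>A. ?good V r"
    using insert by blast
  have good_append: "?good (V @ W) r" if "?good V r" for r W
    using that by (metis take_append le_add1 length_append order_trans diff_is_0_eq append_Nil2 take0)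
  show ?case
  proof (cases "?good V q")
    case True then show ?thesis using V by (intro exI[of _ V]) auto
  next
    case False
    then have "foldl \<delta> q V \<in> L" by (metis order_refl take_all)
    then obtain v where "foldl \<delta> (foldl \<delta> q V) v \<in> F" using live by blast
    then have "?good (V @ v) q"
      by (intro exI[of _ "length (V @ v)"]) auto
    then show ?thesis using V good_append by (intro exI[of _ "V @ v"]) auto
  qed
qed

definition overlaps :: "'a list \<Rightarrow> 'a list \<Rightarrow> nat set" where
  "overlaps u v = {j. j \<le> length u \<and> j \<le> length v \<and> drop (length v - j) v = take j u}"

text \<open>Updating \<^const>\<open>overlaps\<close> letter by letter detects the occurrences of \<open>u\<close> with
  finitely many states.\<close>
definition overlaps_step :: "'a list \<Rightarrow> nat set \<Rightarrow> 'a \<Rightarrow> nat set" where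
  "overlaps_step u J x = insert 0 (Suc ` {j\<in>J. j < length u \<and> u ! j = x})"

lemma overlaps_Nil: "overlaps u [] = {0}"
  by (auto simp: overlaps_def)

lemma overlaps_snoc: "overlaps u (v @ [x]) = overlaps_step u (overlaps u v) x"
proof (intro set_eqI iffI)
  fix j assume "j \<in> overlaps u (v @ [x])"
  then have j: "j \<le> length u" "j \<le> Suc (length v)"
    "drop (Suc (length v) - j) (v @ [x]) = take j u" by (auto simp: overlaps_def)
  show "j \<in> overlaps_step u (overlaps u v) x"
  proof (cases j)
    case 0 then show ?thesis by (simp add: overlaps_step_def)
  next
    case (Suc k)
    have k: "k < length u" using j Suc by simp
    have "drop (length v - k) v @ [x] = take k u @ [u ! k]"
      using j(3) Suc j(2) k by (simp add: take_Suc_conv_app_nth Suc_diff_le)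
    then have "drop (length v - k) v = take k u" "u ! k = x" by auto
    then show ?thesis using j Suc k by (auto simp: overlaps_def overlaps_step_def)
  qed
next
  fix j assume "j \<in> overlaps_step u (overlaps u v) x"
  then consider "j = 0" | k where "j = Suc k" "k \<in> overlaps u v" "k < length u" "u ! k = x"
    by (auto simp: overlaps_step_def)
  then show "j \<in> overlaps u (v @ [x])"
  proof cases
    case 1 then show ?thesis by (simp add: overlaps_def)
  next
    case 2
    then have "k \<le> length v" "drop (length v - k) v = take k u" by (auto simp: overlaps_def)
    with 2 show ?thesis by (auto simp: overlaps_def take_Suc_conv_app_nth)
  qed
qed

lemma overlaps_subset: "overlaps u v \<subseteq> {0..length u}"
  by (auto simp: overlaps_def)

lemma overlaps_step_subset: "overlaps_step u J x \<subseteq> {0..length u}"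
  by (auto simp: overlaps_step_def)

lemma length_in_overlaps_prefix_of_iff:
  "length u \<in> overlaps u (prefix_of \<beta> m) \<longleftrightarrow> length u \<le> m \<and> window \<beta> (m - length u) (length u) = u"
proof -
  have "length u \<le> m \<Longrightarrow> drop (m - length u) (map \<beta> [0..<m]) = window \<beta> (m - length u) (length u)"
    by (simp add: window_def drop_map)
  then show ?thesis by (auto simp: overlaps_def prefix_of_def)
qed

lemma card_overlap_positions_le:
  "card {m. m < M \<and> length u \<in> overlaps u (prefix_of \<beta> m)} \<le> occ u (prefix_of \<beta> M)"
  "occ u (prefix_of \<beta> M) \<le> card {m. m < M \<and> length u \<in> overlaps u (prefix_of \<beta> m)} + 1"
proof -
  let ?A = "{m. m < M \<and> length u \<in> overlaps u (prefix_of \<beta> m)}"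
  let ?B = "{i. i + length u \<le> M \<and> window \<beta> i (length u) = u}"
  let ?C = "{i. i + length u < M \<and> window \<beta> i (length u) = u}"
  have "?A = (\<lambda>i. i + length u) ` ?C"
  proof (intro set_eqI iffI)
    fix m assume "m \<in> ?A"
    then show "m \<in> (\<lambda>i. i + length u) ` ?C"
      by (intro image_eqI[of _ _ "m - length u"]) (auto simp: length_in_overlaps_prefix_of_iff)
  qed (auto simp: length_in_overlaps_prefix_of_iff)
  then have A: "card ?A = card ?C"
    by (simp add: card_image inj_on_def)
  have fin: "finite ?B" by (rule finite_subset[of _ "{..M}"]) auto
  have "card ?C \<le> card ?B"
    by (intro card_mono fin) auto
  then show "card ?A \<le> occ u (prefix_of \<beta> M)" using A by (simp add: occ_prefix_of)
  have "?B \<subseteq> insert (M - length u) ?C"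
    by auto
  then have "card ?B \<le> card (insert (M - length u) ?C)"
    by (intro card_mono) (auto intro: finite_subset[of _ "{..M}"])
  also have "\<dots> \<le> card ?C + 1"
    by (simp add: card_insert_le_m1 card_insert_if)
  finally show "occ u (prefix_of \<beta> M) \<le> card ?A + 1" using A by (simp add: occ_prefix_of)
qed

lemma card_overlap_positions_snoc:
  "card {m. m < M \<and> length u \<in> overlaps u (prefix_of \<beta> m) \<and> \<beta> m = x}
     = occ (u @ [x]) (prefix_of \<beta> M)"
proof -
  let ?C = "{i. i + length (u@[x]) \<le> M \<and> window \<beta> i (length (u@[x])) = u@[x]}"
  have "{m. m < M \<and> length u \<in> overlaps u (prefix_of \<beta> m) \<and> \<beta> m = x} = (\<lambda>i. i + length u) ` ?C"
  proof (intro set_eqI iffI)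
    fix m assume "m \<in> {m. m < M \<and> length u \<in> overlaps u (prefix_of \<beta> m) \<and> \<beta> m = x}"
    then show "m \<in> (\<lambda>i. i + length u) ` ?C"
      by (intro image_eqI[of _ _ "m - length u"]) (auto simp: length_in_overlaps_prefix_of_iff window_snoc)
  qed (auto simp: length_in_overlaps_prefix_of_iff window_snoc)
  then show ?thesis
    by (simp add: occ_prefix_of card_image inj_on_def)
qed

lemma sum_prod_list_list_all2:
  fixes f :: "'a \<Rightarrow> real"
  assumes "\<And>A. A \<in> set As \<Longrightarrow> finite A"
  shows "(\<Sum>w\<in>{w. list_all2 (\<in>) w As}. prod_list (map f w)) = prod_list (map (sum f) As)"
  using assms
proof (induct As)
  case Nil
  have "{w. list_all2 (\<in>) w []} = {[]}" by auto
  then show ?case by simp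
next
  case (Cons A As)
  have eq: "{w. list_all2 (\<in>) w (A # As)} = (\<lambda>(a, w). a # w) ` (A \<times> {w. list_all2 (\<in>) w As})"
    by (auto simp: list_all2_Cons2)
  have inj: "inj_on (\<lambda>(a, w). a # w) (A \<times> {w. list_all2 (\<in>) w As})"
    by (auto simp: inj_on_def)
  have "(\<Sum>w\<in>{w. list_all2 (\<in>) w (A # As)}. prod_list (map f w))
      = (\<Sum>a\<in>A. \<Sum>w\<in>{w. list_all2 (\<in>) w As}. f a * prod_list (map f w))"
    unfolding eq sum.reindex[OF inj] by (simp add: case_prod_beta sum.cartesian_product)
  also have "\<dots> = sum f A * (\<Sum>w\<in>{w. list_all2 (\<in>) w As}. prod_list (map f w))"
    by (simp only: sum_product)
  finally show ?case
    using Cons by simp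
qed

lemma prod_list_nonneg_le_1:
  fixes b :: "'c \<Rightarrow> real"
  assumes "\<And>c. c \<in> set C \<Longrightarrow> 0 \<le> b c \<and> b c \<le> 1"
  shows "0 \<le> prod_list (map b C) \<and> prod_list (map b C) \<le> 1"
  using assms by (induct C) (auto intro: mult_le_one)

lemma prod_list_pos: "(\<And>a. 0 < p a) \<Longrightarrow> (0::real) < prod_list (map p w)"
  by (induct w) auto

lemma prod_list_diff_le:
  fixes a b :: "'c \<Rightarrow> real"
  assumes "\<And>c. c \<in> set C \<Longrightarrow> 0 \<le> a c \<and> a c \<le> b c \<and> b c \<le> 1 \<and> b c - a c \<le> d"
  shows "prod_list (map a C) \<le> prod_list (map b C) \<and>
         prod_list (map b C) - prod_list (map a C) \<le> real (length C) * d"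
  using assms
proof (induct C)
  case Nil then show ?case by simp
next
  case (Cons c C)
  let ?A = "prod_list (map a C)" and ?B = "prod_list (map b C)"
  have IH: "?A \<le> ?B" "?B - ?A \<le> length C * d" using Cons by auto
  have A: "0 \<le> ?A \<and> ?A \<le> 1" using prod_list_nonneg_le_1[of C a] Cons.prems by force
  have c: "0 \<le> a c" "a c \<le> b c" "b c \<le> 1" "b c - a c \<le> d" using Cons.prems by auto
  have "a c * ?A \<le> b c * ?B" using c IH A by (intro mult_mono) auto
  moreover have "b c * ?B - a c * ?A = b c * (?B - ?A) + (b c - a c) * ?A"
    by (simp add: algebra_simps)
  moreover have "b c * (?B - ?A) \<le> ?B - ?A" using c IH by (intro mult_left_le_one_le) auto
  moreover have "(b c - a c) * ?A \<le> d" using c A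
    by (metis diff_ge_0_iff_ge mult_left_le mult_right_mono order_trans)
  ultimately show ?case using IH by (simp add: algebra_simps)
qed

lemma abs_le_add_square_div: "lam > 0 \<Longrightarrow> \<bar>g::real\<bar> \<le> lam + g\<^sup>2 / lam"
proof (cases "\<bar>g\<bar> \<le> lam")
  case False
  assume l: "lam > 0"
  then have "\<bar>g\<bar> * lam \<le> \<bar>g\<bar> * \<bar>g\<bar>" using False by (intro mult_left_mono) auto
  then have "\<bar>g\<bar> \<le> g\<^sup>2 / lam" using l by (simp add: field_simps power2_eq_square abs_mult_self_eq)
  then show ?thesis using l by (smt (verit) divide_nonneg_pos zero_le_power2)
qed (smt (verit) divide_nonneg_pos zero_le_power2)

text \<open>Summing the \<open>n\<close> window sums \<open>\<Sum>j<n. X (i+j)\<close>, \<open>i < N\<close>, counts every \<open>X t\<close>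
  exactly \<open>n\<close> times, up to boundary effects at both ends.\<close>
lemma abs_sum_window_sums_diff_le:
  fixes X :: "nat \<Rightarrow> real"
  assumes X: "\<And>t. \<bar>X t\<bar> \<le> 1"
  shows "\<bar>real n * (\<Sum>t<N. X t) - (\<Sum>i<N. \<Sum>j<n. X (i + j))\<bar> \<le> 2 * real n * real n"
proof -
  have interval: "\<bar>\<Sum>t\<in>{a..<a+k}. X t\<bar> \<le> real k" for a k
  proof -
    have "\<bar>\<Sum>t\<in>{a..<a+k}. X t\<bar> \<le> (\<Sum>t\<in>{a..<a+k}. \<bar>X t\<bar>)" by (rule sum_abs)
    also have "\<dots> \<le> (\<Sum>t\<in>{a..<a+k}. 1)" by (intro sum_mono X)
    finally show ?thesis by simp
  qed
  have shifted: "\<bar>(\<Sum>t<N. X t) - (\<Sum>i<N. X (i + j))\<bar> \<le> 2 * real j" for j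
  proof -
    have e1: "(\<Sum>i<N. X (i + j)) = (\<Sum>t\<in>{j..<j+N}. X t)"
      by (rule sum.reindex_bij_witness[of _ "\<lambda>t. t - j" "\<lambda>i. i + j"]) auto
    have e2: "(\<Sum>t<N+j. X t) = (\<Sum>t<N. X t) + (\<Sum>t\<in>{N..<N+j}. X t)"
      by (simp add: sum.atLeastLessThan_concat[symmetric] lessThan_atLeast0 add.commute)
    have e3: "(\<Sum>t<N+j. X t) = (\<Sum>t<j. X t) + (\<Sum>t\<in>{j..<j+N}. X t)"
      by (simp add: sum.atLeastLessThan_concat[symmetric] lessThan_atLeast0 add.commute)
    have "\<bar>\<Sum>t<j. X t\<bar> \<le> real j" using interval[of 0 j] by (simp add: lessThan_atLeast0)
    then show ?thesis using e1 e2 e3 interval[of N j] by linarith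
  qed
  have "real n * (\<Sum>t<N. X t) - (\<Sum>i<N. \<Sum>j<n. X (i + j))
      = (\<Sum>j<n. (\<Sum>t<N. X t) - (\<Sum>i<N. X (i + j)))"
    by (simp add: sum_subtractf sum.swap[of _ "{..<N}"])
  also have "\<bar>\<dots>\<bar> \<le> (\<Sum>j<n. \<bar>(\<Sum>t<N. X t) - (\<Sum>i<N. X (i + j))\<bar>)" by (rule sum_abs)
  also have "\<dots> \<le> (\<Sum>j<n. 2 * real n)"
    by (intro sum_mono order_trans[OF shifted]) auto
  finally show ?thesis by simp
qed

section \<open>A law of large numbers along the run of an automaton\<close>

text \<open>Letters are grouped into the finitely many classes given by their action on the
  states and by whether they equal the marked letter \<open>x\<close>. Class words of length \<open>n\<close>
  occur in \<open>\<alpha>\<close> with the frequencies of the induced i.i.d.\ law on classes. The gain,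
  which scores \<open>1 - p x\<close> for reading \<open>x\<close> and \<open>- p x\<close> for any other letter while the
  automaton is in \<open>F\<close>, has conditional mean zero given the current state; hence the
  gain of a block of length \<open>n\<close> has second moment at most \<open>n\<close>, and the average gain
  along \<open>\<alpha>\<close> tends to zero.\<close>
locale generic_bernoulli_automaton =
  fixes p :: "'a \<Rightarrow> real" and \<alpha> :: "nat \<Rightarrow> 'a" and Q :: "'s set"
    and \<delta> :: "'s \<Rightarrow> 'a \<Rightarrow> 's" and q0 :: 's and F :: "'s set" and x :: 'a
  assumes p_pos: "\<And>a. 0 < p a" and p_has_sum: "(p has_sum 1) UNIV"
    and frequency: "\<And>w. (\<lambda>N. real (occ w (prefix_of \<alpha> N)) / real N) \<longlonglongrightarrow> prod_list (map p w)"
    and finite_Q: "finite Q" and q0_in_Q: "q0 \<in> Q" and \<delta>_in_Q: "\<And>s a. s \<in> Q \<Longrightarrow> \<delta> s a \<in> Q"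
begin

definition letter_class :: "'a \<Rightarrow> ('s \<Rightarrow> 's) \<times> bool" where
  "letter_class b = (restrict (\<lambda>q. \<delta> q b) Q, b = x)"

definition classes :: "(('s \<Rightarrow> 's) \<times> bool) set" where
  "classes = range letter_class"

definition class_prob :: "('s \<Rightarrow> 's) \<times> bool \<Rightarrow> real" where
  "class_prob c = infsum p (letter_class -` {c})"

definition gain :: "'s \<Rightarrow> bool \<Rightarrow> real" where
  "gain s e = (if s \<in> F then (if e then 1 else 0) - p x else 0)"

fun total_gain :: "'s \<Rightarrow> (('s \<Rightarrow> 's) \<times> bool) list \<Rightarrow> real" where
  "total_gain s [] = 0"
| "total_gain s (c # C) = gain s (snd c) + total_gain (fst c s) C"

text \<open>Expectation over words of \<open>n\<close> independent classes distributed by \<^const>\<open>class_prob\<close>.\<close>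
primrec expect :: "nat \<Rightarrow> ((('s \<Rightarrow> 's) \<times> bool) list \<Rightarrow> real) \<Rightarrow> real" where
  "expect 0 f = f []"
| "expect (Suc n) f = (\<Sum>c\<in>classes. class_prob c * expect n (\<lambda>C. f (c # C)))"

definition class_words :: "nat \<Rightarrow> (('s \<Rightarrow> 's) \<times> bool) list set" where
  "class_words n = {C. set C \<subseteq> classes \<and> length C = n}"

definition class_word_prob :: "(('s \<Rightarrow> 's) \<times> bool) list \<Rightarrow> real" where
  "class_word_prob C = prod_list (map class_prob C)"

definition class_word_count :: "nat \<Rightarrow> (('s \<Rightarrow> 's) \<times> bool) list \<Rightarrow> nat \<Rightarrow> nat" where
  "class_word_count n C N = card {i. i < N \<and> map letter_class (window \<alpha> i n) = C}"

definition gain_seq :: "nat \<Rightarrow> real" where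
  "gain_seq t = gain (run_from \<delta> q0 \<alpha> t) (\<alpha> t = x)"

lemma finite_classes: "finite classes"
proof -
  have "classes \<subseteq> (Q \<rightarrow>\<^sub>E Q) \<times> UNIV"
    by (auto simp: classes_def letter_class_def \<delta>_in_Q)
  moreover have "finite ((Q \<rightarrow>\<^sub>E Q) \<times> (UNIV :: bool set))"
    using finite_Q by (intro finite_cartesian_product finite_PiE) auto
  ultimately show ?thesis by (rule finite_subset)
qed

lemma finite_class_words: "finite (class_words n)"
  unfolding class_words_def using finite_classes by (rule finite_lists_length_eq)

lemma length_class_words: "C \<in> class_words n \<Longrightarrow> length C = n"
  by (simp add: class_words_def)

lemma class_words_Suc: "class_words (Suc n) = (\<lambda>(C, c). c # C) ` (class_words n \<times> classes)"
  unfolding class_words_def by (rule lists_length_Suc_eq)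

lemma class_window_in_class_words: "map letter_class (window \<alpha> i n) \<in> class_words n"
  by (auto simp: class_words_def classes_def)

lemma class_words_nonempty: "class_words n \<noteq> {}"
  using class_window_in_class_words by blast

lemma p_summable_on: "p summable_on A"
  using p_has_sum summable_on_subset[of p UNIV A] by (auto simp: summable_on_def)

lemma p_le_1: "p a \<le> 1"
  using finite_sum_le_has_sum[OF p_has_sum, of "{a}"] by (simp add: less_imp_le p_pos)

lemma class_prob_nonneg: "0 \<le> class_prob c"
  unfolding class_prob_def by (rule infsum_nonneg) (simp add: less_imp_le p_pos)

lemma class_prob_le_1: "class_prob c \<le> 1"
proof -
  have "class_prob c \<le> infsum p UNIV"
    unfolding class_prob_def
    by (rule infsum_mono_neutral) (auto simp: p_summable_on less_imp_le p_pos)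
  then show ?thesis using infsumI[OF p_has_sum] by simp
qed

lemma infsum_vimage_letter_class: "finite A \<Longrightarrow> infsum p (letter_class -` A) = (\<Sum>c\<in>A. class_prob c)"
proof (induct A rule: finite_induct)
  case (insert c A)
  have "letter_class -` insert c A = letter_class -` {c} \<union> letter_class -` A"
    and "letter_class -` {c} \<inter> letter_class -` A = {}"
    using insert by auto
  then show ?case using insert by (simp add: infsum_Un_disjoint p_summable_on class_prob_def)
qed simp

lemma sum_class_prob: "(\<Sum>c\<in>classes. class_prob c) = 1"
proof -
  have "letter_class -` classes = UNIV" by (auto simp: classes_def)
  then show ?thesis
    using infsum_vimage_letter_class[OF finite_classes] infsumI[OF p_has_sum] by simp
qed

lemma class_prob_marked: "class_prob (letter_class x) = p x"
proof -
  have "letter_class -` {letter_class x} = {x}"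
    by (auto simp: letter_class_def)
  then show ?thesis by (simp add: class_prob_def)
qed

lemma class_prob_approx:
  assumes "d > 0"
  shows "\<exists>W. finite W \<and> W \<subseteq> letter_class -` {c} \<and> class_prob c - d \<le> sum p W \<and> sum p W \<le> class_prob c"
proof -
  have "(p has_sum class_prob c) (letter_class -` {c})"
    unfolding class_prob_def using p_summable_on by (rule has_sum_infsum)
  from has_sum_finite_approximation[OF this assms] obtain W where
    W: "finite W" "W \<subseteq> letter_class -` {c}" "dist (sum p W) (class_prob c) \<le> d" by blast
  have "sum p W \<le> class_prob c" unfolding class_prob_def
    by (rule finite_sum_le_infsum) (use W p_summable_on in \<open>auto simp: less_imp_le p_pos\<close>)
  then show ?thesis using W by (intro exI[of _ W]) (auto simp: dist_real_def)
qed

lemma expect_eq_sum: "expect n f = (\<Sum>C\<in>class_words n. class_word_prob C * f C)"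
proof (induct n arbitrary: f)
  case 0
  have "class_words 0 = {[]}" by (auto simp: class_words_def)
  then show ?case by (simp add: class_word_prob_def)
next
  case (Suc n)
  have inj: "inj_on (\<lambda>(C, c). c # C) (class_words n \<times> classes)" by (auto simp: inj_on_def)
  have "(\<Sum>C\<in>class_words (Suc n). class_word_prob C * f C)
      = (\<Sum>(C, c)\<in>class_words n \<times> classes. class_prob c * (class_word_prob C * f (c # C)))"
    unfolding class_words_Suc sum.reindex[OF inj]
    by (simp add: case_prod_unfold class_word_prob_def mult.assoc)
  also have "\<dots> = (\<Sum>c\<in>classes. \<Sum>C\<in>class_words n. class_prob c * (class_word_prob C * f (c # C)))"
    by (simp add: sum.cartesian_product[symmetric] sum.swap[of _ "class_words n"])
  finally show ?case
    by (simp add: Suc sum_distrib_left)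
qed

lemma expect_const: "expect n (\<lambda>_. k) = k"
  by (induct n) (simp_all add: sum_distrib_right[symmetric] sum_class_prob)

lemma expect_add: "expect n (\<lambda>C. f C + g C) = expect n f + expect n g"
  by (induct n arbitrary: f g) (simp_all add: distrib_left sum.distrib)

lemma expect_cmult: "expect n (\<lambda>C. k * f C) = k * expect n f"
  by (induct n arbitrary: f) (simp_all add: sum_distrib_left mult.left_commute)

lemma expect_mono: "(\<And>C. f C \<le> g C) \<Longrightarrow> expect n f \<le> expect n g"
  by (induct n arbitrary: f g) (auto intro!: sum_mono mult_left_mono simp: class_prob_nonneg)

lemma sum_class_word_prob: "(\<Sum>C\<in>class_words n. class_word_prob C) = 1"
  using expect_const[of n 1] by (simp add: expect_eq_sum)

lemma expect_gain: "(\<Sum>c\<in>classes. class_prob c * gain s (snd c)) = 0"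
proof (cases "s \<in> F")
  case True
  have "(\<Sum>c\<in>classes. class_prob c * (if snd c then 1 else 0)) = (\<Sum>c\<in>{letter_class x}. class_prob c)"
    by (rule sum.mono_neutral_cong_right[OF finite_classes])
       (auto simp: classes_def letter_class_def)
  then show ?thesis
    using True by (simp add: gain_def algebra_simps sum_subtractf sum_class_prob class_prob_marked
        flip: sum_distrib_left)
qed (simp add: gain_def)

lemma abs_gain_le_1: "\<bar>gain s e\<bar> \<le> 1"
  using p_pos[of x] p_le_1[of x] by (auto simp: gain_def)

lemma abs_total_gain_le: "\<bar>total_gain s C\<bar> \<le> real (length C)"
proof (induct C arbitrary: s)
  case (Cons c C)
  show ?case
    using abs_gain_le_1[of s "snd c"] Cons[of "fst c s"]
      abs_triangle_ineq[of "gain s (snd c)" "total_gain (fst c s) C"] by simp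
qed simp

lemma expect_total_gain: "expect n (total_gain s) = 0"
  by (induct n arbitrary: s) (simp_all add: expect_add expect_const expect_gain)

lemma expect_total_gain_square_le: "expect n (\<lambda>C. (total_gain s C)\<^sup>2) \<le> real n"
proof (induct n arbitrary: s)
  case (Suc n)
  have "expect (Suc n) (\<lambda>C. (total_gain s C)\<^sup>2)
      = (\<Sum>c\<in>classes. class_prob c * expect n (\<lambda>C. (total_gain s (c # C))\<^sup>2))"
    by simp
  also have "\<dots> = (\<Sum>c\<in>classes. class_prob c * ((gain s (snd c))\<^sup>2 + expect n (\<lambda>C. (total_gain (fst c s) C)\<^sup>2)))"
  proof (intro sum.cong refl arg_cong2[where f="(*)"])
    fix c
    have "(\<lambda>C. (gain s (snd c) + total_gain (fst c s) C)\<^sup>2)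
        = (\<lambda>C. (gain s (snd c))\<^sup>2 + ((2 * gain s (snd c)) * total_gain (fst c s) C + (total_gain (fst c s) C)\<^sup>2))"
      by (simp add: power2_eq_square algebra_simps)
    then show "expect n (\<lambda>C. (total_gain s (c # C))\<^sup>2)
        = (gain s (snd c))\<^sup>2 + expect n (\<lambda>C. (total_gain (fst c s) C)\<^sup>2)"
      by (simp add: expect_add expect_const expect_cmult expect_total_gain)
  qed
  also have "\<dots> \<le> (\<Sum>c\<in>classes. class_prob c * (1 + real n))"
    using abs_gain_le_1 abs_square_le_1
    by (intro sum_mono mult_left_mono add_mono Suc) (auto simp: class_prob_nonneg)
  also have "\<dots> = 1 + real n" by (simp add: sum_distrib_right[symmetric] sum_class_prob)
  finally show ?case by simp
qed simp

lemma expect_abs_total_gain_le: "lam > 0 \<Longrightarrow> expect n (\<lambda>C. \<bar>total_gain s C\<bar>) \<le> lam + real n / lam"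
proof -
  assume lam: "lam > 0"
  have "expect n (\<lambda>C. \<bar>total_gain s C\<bar>) \<le> expect n (\<lambda>C. lam + (1/lam) * (total_gain s C)\<^sup>2)"
    by (intro expect_mono) (simp add: abs_le_add_square_div[OF lam])
  also have "\<dots> = lam + (1/lam) * expect n (\<lambda>C. (total_gain s C)\<^sup>2)"
    using expect_cmult[of n "1/lam" "\<lambda>C. (total_gain s C)\<^sup>2"] by (simp add: expect_add expect_const)
  also have "\<dots> \<le> lam + (1/lam) * real n"
    using expect_total_gain_square_le lam by (intro add_left_mono mult_left_mono) auto
  finally show ?thesis by simp
qed

end

context generic_bernoulli_automaton
begin

lemma map_letter_class_eq_if_list_all2:
  "list_all2 (\<lambda>b c. b \<in> W c) w C \<Longrightarrow> (\<And>c. W c \<subseteq> letter_class -` {c}) \<Longrightarrow> map letter_class w = C"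
  by (induct rule: list_all2_induct) auto

lemma exists_finite_words_approx_class_word:
  assumes C: "C \<in> class_words n" and \<eta>: "\<eta> > 0"
  shows "\<exists>Ws. finite Ws \<and> (\<forall>w\<in>Ws. map letter_class w = C) \<and>
    class_word_prob C - \<eta> \<le> (\<Sum>w\<in>Ws. prod_list (map p w))"
proof -
  define d where "d = \<eta> / (real n + 1)"
  have d: "d > 0" "real n * d \<le> \<eta>" using \<eta> by (simp_all add: d_def field_simps)
  obtain W where W: "\<And>c. finite (W c)" "\<And>c. W c \<subseteq> letter_class -` {c}"
    "\<And>c. class_prob c - d \<le> sum p (W c)" "\<And>c. sum p (W c) \<le> class_prob c"
    using class_prob_approx[OF d(1)] by metis
  define Ws where "Ws = {w. list_all2 (\<in>) w (map W C)}"
  have "finite Ws"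
  proof (rule finite_subset)
    show "Ws \<subseteq> {w. set w \<subseteq> (\<Union>c\<in>set C. W c) \<and> length w = length C}"
      unfolding Ws_def list_all2_conv_all_nth by (auto simp: in_set_conv_nth) (metis nth_mem)
    show "finite {w. set w \<subseteq> (\<Union>c\<in>set C. W c) \<and> length w = length C}"
      by (rule finite_lists_length_eq) (auto simp: W(1))
  qed
  moreover have "map letter_class w = C" if "w \<in> Ws" for w
    using that map_letter_class_eq_if_list_all2[of W w C] W(2) by (simp add: Ws_def list_all2_map2)
  moreover have "class_word_prob C - real n * d \<le> prod_list (map (\<lambda>c. sum p (W c)) C)"
  proof -
    have "0 \<le> sum p (W c) \<and> sum p (W c) \<le> class_prob c \<and> class_prob c \<le> 1 \<and>
        class_prob c - sum p (W c) \<le> d" for c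
      using W by (auto intro!: sum_nonneg simp: less_imp_le p_pos class_prob_le_1 algebra_simps)
    then have "prod_list (map class_prob C) - prod_list (map (\<lambda>c. sum p (W c)) C) \<le> real (length C) * d"
      using prod_list_diff_le[of C "\<lambda>c. sum p (W c)" class_prob d] by blast
    then show ?thesis
      using length_class_words[OF C] by (simp add: class_word_prob_def)
  qed
  moreover have "(\<Sum>w\<in>Ws. prod_list (map p w)) = prod_list (map (\<lambda>c. sum p (W c)) C)"
    unfolding Ws_def by (subst sum_prod_list_list_all2) (auto simp: W(1) o_def)
  ultimately show ?thesis
    using d(2) by (intro exI[of _ Ws]) auto
qed

text \<open>The class word \<open>C\<close> contains the disjoint union of the words \<open>w\<close> whose letters
  lie in finite approximations of the classes of \<open>C\<close>; genericity of \<open>\<alpha>\<close> for these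
  finitely many words bounds the frequency of \<open>C\<close> from below.\<close>
lemma eventually_class_word_count_ge:
  assumes C: "C \<in> class_words n" and \<eta>: "\<eta> > 0"
  shows "eventually (\<lambda>N. (class_word_prob C - \<eta>) * real N \<le> real (class_word_count n C N)) sequentially"
proof -
  obtain Ws where finite_Ws: "finite Ws" and Ws_class: "\<And>w. w \<in> Ws \<Longrightarrow> map letter_class w = C"
    and lower: "class_word_prob C - \<eta> / 2 \<le> (\<Sum>w\<in>Ws. prod_list (map p w))"
    using exists_finite_words_approx_class_word[OF C, of "\<eta> / 2"] \<eta> by auto
  have Ws_length: "w \<in> Ws \<Longrightarrow> length w = n" for w
    using Ws_class length_class_words[OF C] by force
  have "(\<lambda>N. \<Sum>w\<in>Ws. real (occ w (prefix_of \<alpha> N)) / real N) \<longlonglongrightarrow> (\<Sum>w\<in>Ws. prod_list (map p w))"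
    by (intro tendsto_sum frequency)
  then have ev1: "eventually (\<lambda>N. (\<Sum>w\<in>Ws. prod_list (map p w)) - \<eta>/4
      < (\<Sum>w\<in>Ws. real (occ w (prefix_of \<alpha> N)) / real N)) sequentially"
    using \<eta> by (intro order_tendstoD(1)) auto
  have "(\<lambda>N. real (card Ws) / real N) \<longlonglongrightarrow> 0"
    by (rule tendsto_divide_0[OF tendsto_const])
       (rule filterlim_at_top_imp_at_infinity[OF filterlim_real_sequentially])
  then have ev2: "eventually (\<lambda>N. real (card Ws) / real N < \<eta>/4) sequentially"
    using \<eta> by (intro order_tendstoD(2)) auto
  show ?thesis
    using ev1 ev2 eventually_gt_at_top[of 0]
  proof eventually_elim
    case (elim N)
    have "(\<Sum>w\<in>Ws. card {i. i < N \<and> window \<alpha> i n = w})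
        = card (\<Union>w\<in>Ws. {i. i < N \<and> window \<alpha> i n = w})"
      by (rule card_UN_disjoint'[symmetric]) (auto simp: finite_Ws disjoint_family_on_def)
    also have "\<dots> \<le> class_word_count n C N"
      unfolding class_word_count_def using Ws_class by (intro card_mono) auto
    finally have count: "(\<Sum>w\<in>Ws. real (card {i. i < N \<and> window \<alpha> i n = w})) \<le> real (class_word_count n C N)"
      by (simp flip: of_nat_sum)
    have "(\<Sum>w\<in>Ws. real (occ w (prefix_of \<alpha> N)))
        \<le> (\<Sum>w\<in>Ws. real (card {i. i < N \<and> window \<alpha> i n = w}) + 1)"
    proof (intro sum_mono)
      fix w assume "w \<in> Ws"
      then show "real (occ w (prefix_of \<alpha> N)) \<le> real (card {i. i < N \<and> window \<alpha> i n = w}) + 1"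
        using occ_prefix_of_le_card_starts[of w \<alpha> N] Ws_length by simp
    qed
    also have "\<dots> \<le> real (class_word_count n C N) + real (card Ws)"
      using count by (simp add: sum.distrib)
    finally have "(\<Sum>w\<in>Ws. real (occ w (prefix_of \<alpha> N)) / real N)
        \<le> real (class_word_count n C N) / real N + real (card Ws) / real N"
      by (simp add: sum_divide_distrib[symmetric] add_divide_distrib[symmetric] divide_right_mono)
    then have "class_word_prob C - \<eta> \<le> real (class_word_count n C N) / real N"
      using elim lower by linarith
    then show ?case using elim by (simp add: field_simps)
  qed
qed

lemma sum_class_word_count_mult:
  "(\<Sum>i<N. f (map letter_class (window \<alpha> i n))) = (\<Sum>C\<in>class_words n. real (class_word_count n C N) * f C)"
proof -
  have "(\<Sum>i<N. f (map letter_class (window \<alpha> i n)))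
      = (\<Sum>C\<in>class_words n. \<Sum>i\<in>{i\<in>{..<N}. map letter_class (window \<alpha> i n) = C}. f C)"
    by (subst sum.group[symmetric, OF _ finite_class_words, where g = "\<lambda>i. map letter_class (window \<alpha> i n)"])
       (auto simp: class_window_in_class_words intro!: sum.cong)
  then show ?thesis
    by (simp add: class_word_count_def)
qed

lemma sum_class_word_count: "(\<Sum>C\<in>class_words n. real (class_word_count n C N)) = real N"
  using sum_class_word_count_mult[where f="\<lambda>_. 1"] by simp

text \<open>Since the class-word frequencies add up to \<open>1\<close>, the lower bounds for all class words
  of length \<open>n\<close> yield upper bounds.\<close>
lemma eventually_class_word_count_le:
  assumes \<eta>: "\<eta> > 0"
  shows "eventually (\<lambda>N. \<forall>C\<in>class_words n. real (class_word_count n C N) \<le> (class_word_prob C + \<eta>) * real N)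
    sequentially"
proof -
  define L where "L = card (class_words n)"
  have L: "L \<ge> 1"
    using class_words_nonempty finite_class_words unfolding L_def by (simp add: Suc_leI card_gt_0_iff)
  define \<eta>' where "\<eta>' = \<eta> / real L"
  have \<eta>': "\<eta>' > 0" "real L * \<eta>' = \<eta>" using \<eta> L by (simp_all add: \<eta>'_def)
  have "eventually (\<lambda>N. \<forall>C\<in>class_words n. (class_word_prob C - \<eta>') * real N \<le> real (class_word_count n C N))
      sequentially"
    using finite_class_words eventually_class_word_count_ge[OF _ \<eta>'(1)] by (simp add: eventually_ball_finite)
  then show ?thesis
  proof eventually_elim
    case (elim N)
    show ?case
    proof
      fix C assume C: "C \<in> class_words n"
      let ?R = "class_words n - {C}"
      have "real N = real (class_word_count n C N) + (\<Sum>C'\<in>?R. real (class_word_count n C' N))"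
        using sum_class_word_count[of n N]
          sum.remove[OF finite_class_words C, of "\<lambda>C. real (class_word_count n C N)"] by simp
      moreover have "(\<Sum>C'\<in>?R. (class_word_prob C' - \<eta>') * real N) \<le> (\<Sum>C'\<in>?R. real (class_word_count n C' N))"
        using elim by (intro sum_mono) auto
      moreover have "(\<Sum>C'\<in>?R. (class_word_prob C' - \<eta>') * real N)
          = ((\<Sum>C'\<in>?R. class_word_prob C') - real (card ?R) * \<eta>') * real N"
        by (simp add: sum_distrib_right[symmetric] sum_subtractf)
      moreover have "(\<Sum>C'\<in>?R. class_word_prob C') = 1 - class_word_prob C"
        using sum_class_word_prob[of n] sum.remove[OF finite_class_words C, of class_word_prob] by simp
      moreover have "real (card ?R) * \<eta>' * real N \<le> \<eta> * real N"
      proof -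
        have "card ?R \<le> L" unfolding L_def by (intro card_mono finite_class_words) auto
        then show ?thesis
          using \<eta>' by (intro mult_right_mono) (auto intro: order_trans[OF mult_right_mono])
      qed
      ultimately show "real (class_word_count n C N) \<le> (class_word_prob C + \<eta>) * real N"
        by (simp add: algebra_simps)
    qed
  qed
qed

lemma run_from_in_Q: "run_from \<delta> q0 \<alpha> t \<in> Q"
  using run_from_in[of q0 Q \<delta>] q0_in_Q \<delta>_in_Q by blast

lemma sum_window_gain_seq: "(\<Sum>j<n. gain_seq (i + j)) = total_gain (run_from \<delta> q0 \<alpha> i) (map letter_class (window \<alpha> i n))"
proof (induct n arbitrary: i)
  case (Suc n)
  have "(\<Sum>j<Suc n. gain_seq (i + j)) = gain_seq i + (\<Sum>j<n. gain_seq (Suc i + j))"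
    by (subst sum.lessThan_Suc_shift) simp
  moreover have "run_from \<delta> q0 \<alpha> (Suc i) = fst (letter_class (\<alpha> i)) (run_from \<delta> q0 \<alpha> i)"
    using run_from_in_Q[of i] by (simp add: letter_class_def)
  ultimately show ?case
    by (simp only: Suc[of "Suc i"]) (simp add: window_Suc gain_seq_def letter_class_def)
qed simp

lemma abs_gain_seq_le_1: "\<bar>gain_seq t\<bar> \<le> 1"
  by (simp add: gain_seq_def abs_gain_le_1)

text \<open>The state at the start of a window is unknown, so the block gain is bounded by its
  sum over all states.\<close>
lemma eventually_abs_sum_window_gains_le:
  assumes \<eta>: "\<eta> > 0"
  shows "eventually (\<lambda>N. \<bar>\<Sum>i<N. \<Sum>j<n. gain_seq (i + j)\<bar>
    \<le> real N * (expect n (\<lambda>C. \<Sum>s\<in>Q. \<bar>total_gain s C\<bar>)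
                 + \<eta> * real (card (class_words n)) * (real (card Q) * real n))) sequentially"
proof -
  define M where "M C = (\<Sum>s\<in>Q. \<bar>total_gain s C\<bar>)" for C
  have M: "0 \<le> M C \<and> M C \<le> real (card Q) * real n" if "C \<in> class_words n" for C
  proof -
    have "M C \<le> (\<Sum>s\<in>Q. real n)"
      unfolding M_def using abs_total_gain_le length_class_words[OF that] by (intro sum_mono) force
    then show ?thesis by (simp add: M_def sum_nonneg)
  qed
  show ?thesis
    using eventually_class_word_count_le[OF \<eta>, of n]
  proof eventually_elim
    case (elim N)
    have "\<bar>\<Sum>i<N. \<Sum>j<n. gain_seq (i + j)\<bar> \<le> (\<Sum>i<N. \<bar>total_gain (run_from \<delta> q0 \<alpha> i) (map letter_class (window \<alpha> i n))\<bar>)"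
      unfolding sum_window_gain_seq by (rule sum_abs)
    also have "\<dots> \<le> (\<Sum>i<N. M (map letter_class (window \<alpha> i n)))"
      unfolding M_def using run_from_in_Q finite_Q
      by (intro sum_mono member_le_sum[where f = "\<lambda>s. \<bar>total_gain s _\<bar>"]) auto
    also have "\<dots> = (\<Sum>C\<in>class_words n. real (class_word_count n C N) * M C)"
      by (rule sum_class_word_count_mult)
    also have "\<dots> \<le> (\<Sum>C\<in>class_words n. (class_word_prob C + \<eta>) * real N * M C)"
      using elim M by (intro sum_mono mult_right_mono) auto
    also have "\<dots> = real N * ((\<Sum>C\<in>class_words n. class_word_prob C * M C) + \<eta> * (\<Sum>C\<in>class_words n. M C))"
      by (simp add: sum_distrib_left sum_distrib_right sum.distrib algebra_simps)
    also have "\<dots> \<le> real N * (expect n M + \<eta> * real (card (class_words n)) * (real (card Q) * real n))"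
    proof -
      have "(\<Sum>C\<in>class_words n. M C) \<le> (\<Sum>C\<in>class_words n. real (card Q) * real n)"
        using M by (intro sum_mono) auto
      then show ?thesis
        using \<eta> by (auto simp: expect_eq_sum mult.assoc intro!: mult_left_mono)
    qed
    finally show ?case
      unfolding M_def .
  qed
qed

lemma card_Q_ge_1: "card Q \<ge> 1"
  using finite_Q q0_in_Q by (metis One_nat_def Suc_leI card_gt_0_iff empty_iff)

text \<open>Take \<open>lam = \<epsilon> n / (8 |Q|)\<close> in \<open>abs_le_add_square_div\<close>: block gains are of
  order \<open>sqrt n\<close>.\<close>
lemma expect_sum_abs_total_gain_le:
  assumes \<epsilon>: "\<epsilon> > 0" and n: "64 * real (card Q) ^ 2 / \<epsilon>^2 \<le> real n" "n \<ge> 1"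
  shows "expect n (\<lambda>C. \<Sum>s\<in>Q. \<bar>total_gain s C\<bar>) \<le> \<epsilon> * real n / 4"
proof -
  define K where "K = card Q"
  define lam where "lam = \<epsilon> * real n / (8 * real K)"
  have K: "K \<ge> 1" using card_Q_ge_1 by (simp add: K_def)
  have lam: "lam > 0" using \<epsilon> n K by (simp add: lam_def)
  have "expect n (\<lambda>C. \<Sum>s\<in>Q. \<bar>total_gain s C\<bar>) = (\<Sum>s\<in>Q. expect n (\<lambda>C. \<bar>total_gain s C\<bar>))"
    by (simp add: expect_eq_sum sum_distrib_left sum.swap[of _ Q])
  also have "\<dots> \<le> (\<Sum>s\<in>Q. lam + real n / lam)"
    by (intro sum_mono expect_abs_total_gain_le lam)
  also have "\<dots> = \<epsilon> * real n / 8 + 8 * real K ^ 2 / \<epsilon>"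
    using K \<epsilon> n by (simp add: K_def lam_def field_simps power2_eq_square)
  also have "\<dots> \<le> \<epsilon> * real n / 4"
    using n(1) \<epsilon> by (simp add: K_def field_simps power2_eq_square)
  finally show ?thesis .
qed

theorem gain_seq_average_tendsto_0: "(\<lambda>N. (\<Sum>t<N. gain_seq t) / real N) \<longlonglongrightarrow> 0"
proof (rule tendstoI)
  fix \<epsilon> :: real assume \<epsilon>: "\<epsilon> > 0"
  define K where "K = card Q"
  have K: "K \<ge> 1" using card_Q_ge_1 by (simp add: K_def)
  define n where "n = nat \<lceil>64 * real K ^ 2 / \<epsilon>^2\<rceil> + 1"
  have n: "64 * real K ^ 2 / \<epsilon>^2 \<le> real n" "n \<ge> 1"
    unfolding n_def by linarith+
  have expect: "expect n (\<lambda>C. \<Sum>s\<in>Q. \<bar>total_gain s C\<bar>) \<le> \<epsilon> * real n / 4"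
    using expect_sum_abs_total_gain_le[OF \<epsilon>] n by (simp add: K_def)
  define L where "L = card (class_words n)"
  define \<eta> where "\<eta> = \<epsilon> / (4 * real K * (real L + 1))"
  have \<eta>: "\<eta> > 0" "\<eta> * real L * (real K * real n) \<le> \<epsilon> * real n / 4"
  proof -
    show "\<eta> > 0" using \<epsilon> K by (simp add: \<eta>_def)
    have "4 * real K * (real L + 1) \<noteq> 0" using K by simp
    then have quarter: "\<eta> * (real K * (real L + 1)) = \<epsilon> / 4"
      by (simp add: \<eta>_def field_simps)
    have "\<eta> * real L * (real K * real n) \<le> \<eta> * (real L + 1) * (real K * real n)"
      using \<open>\<eta> > 0\<close> by (intro mult_right_mono mult_left_mono) auto
    also have "\<dots> = \<eta> * (real K * (real L + 1)) * real n"
      by (simp add: algebra_simps)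
    finally show "\<eta> * real L * (real K * real n) \<le> \<epsilon> * real n / 4"
      using quarter by simp
  qed
  have "eventually (\<lambda>N. real N > 4 * real n / \<epsilon>) sequentially"
    using filterlim_real_sequentially by (simp add: filterlim_at_top_dense)
  with eventually_abs_sum_window_gains_le[OF \<eta>(1), of n]
  show "eventually (\<lambda>N. dist ((\<Sum>t<N. gain_seq t) / real N) 0 < \<epsilon>) sequentially"
  proof eventually_elim
    case (elim N)
    have N_pos: "real N > 0" using elim(2) \<epsilon> n by (smt (verit) divide_nonneg_pos of_nat_0_le_iff)
    have "expect n (\<lambda>C. \<Sum>s\<in>Q. \<bar>total_gain s C\<bar>)
        + \<eta> * real (card (class_words n)) * (real (card Q) * real n) \<le> \<epsilon> * real n / 2"
      using expect \<eta>(2) unfolding K_def L_def by linarith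
    then have "\<bar>\<Sum>i<N. \<Sum>j<n. gain_seq (i + j)\<bar> \<le> real N * (\<epsilon> * real n / 2)"
      using elim(1) N_pos by (meson less_imp_le mult_left_mono order_trans)
    then have "real n * \<bar>\<Sum>t<N. gain_seq t\<bar> \<le> real n * (real N * \<epsilon> / 2 + 2 * real n)"
      using abs_sum_window_sums_diff_le[where X=gain_seq and n=n and N=N, OF abs_gain_seq_le_1]
      by (simp add: abs_mult algebra_simps)
    then have "\<bar>\<Sum>t<N. gain_seq t\<bar> \<le> real N * \<epsilon> / 2 + 2 * real n"
      using n(2) by (simp add: mult_le_cancel_left_pos)
    moreover have "2 * real n < real N * \<epsilon> / 2"
      using elim(2) \<epsilon> by (simp add: field_simps)
    ultimately show ?case
      using N_pos by (simp add: dist_real_def field_simps)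
  qed
qed

text \<open>Infinitely many visits keep \<open>F\<close> reachable from every state on the run, so the
  second alternative of \<open>exists_word_reaching_or_leaving\<close> never occurs along the run.\<close>
lemma exists_window_forcing_visit:
  assumes S: "infinite {t. run_from \<delta> q0 \<alpha> t \<in> F}"
  shows "\<exists>V. \<forall>i. window \<alpha> i (length V) = V \<longrightarrow> (\<exists>d\<le>length V. run_from \<delta> q0 \<alpha> (i + d) \<in> F)"
proof -
  define L where "L = {q. \<exists>v. foldl \<delta> q v \<in> F}"
  have run_L: "run_from \<delta> q0 \<alpha> t \<in> L" for t
  proof -
    obtain t' where "t' \<in> {t. run_from \<delta> q0 \<alpha> t \<in> F}" "t < t'"
      using S unfolding infinite_nat_iff_unbounded by blast
    then show ?thesis
      using run_from_add[of \<delta> q0 \<alpha> t "t' - t"] by (auto simp: L_def)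
  qed
  obtain V where V: "\<forall>q\<in>Q. \<exists>j\<le>length V. foldl \<delta> q (take j V) \<in> F \<or> foldl \<delta> q (take j V) \<notin> L"
    using exists_word_reaching_or_leaving[OF finite_Q, of L \<delta> F] by (auto simp: L_def)
  have "\<exists>d\<le>length V. run_from \<delta> q0 \<alpha> (i + d) \<in> F" if "window \<alpha> i (length V) = V" for i
  proof -
    obtain j where j: "j \<le> length V"
      "foldl \<delta> (run_from \<delta> q0 \<alpha> i) (take j V) \<in> F \<or> foldl \<delta> (run_from \<delta> q0 \<alpha> i) (take j V) \<notin> L"
      using V run_from_in_Q[of i] by auto
    have "run_from \<delta> q0 \<alpha> (i + j) = foldl \<delta> (run_from \<delta> q0 \<alpha> i) (take j V)"
      using run_from_add[of \<delta> q0 \<alpha> i j] take_window[OF j(1), of \<alpha> i] that by simp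
    then show ?thesis using j run_L[of "i + j"] by auto
  qed
  then show ?thesis by blast
qed

text \<open>The forcing word has positive frequency in \<open>\<alpha>\<close>.\<close>
lemma selected_positive_lower_density:
  assumes S: "infinite {t. run_from \<delta> q0 \<alpha> t \<in> F}"
  shows "\<exists>c>0. eventually (\<lambda>N. c * real N \<le> real (count_below (\<lambda>t. run_from \<delta> q0 \<alpha> t \<in> F) N)) sequentially"
proof -
  define sel where "sel = count_below (\<lambda>t. run_from \<delta> q0 \<alpha> t \<in> F)"
  obtain V where visit: "\<And>i. window \<alpha> i (length V) = V \<Longrightarrow> \<exists>d\<le>length V. run_from \<delta> q0 \<alpha> (i + d) \<in> F"
    using exists_window_forcing_visit[OF S] by blast
  define k where "k = length V"
  define pV where "pV = prod_list (map p V)"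
  have pV: "pV > 0" unfolding pV_def using prod_list_pos[of p V] p_pos by blast
  define c where "c = pV / (4 * (real k + 1))"
  have "eventually (\<lambda>N. pV / 2 < real (occ V (prefix_of \<alpha> N)) / real N) sequentially"
    using frequency[of V] pV by (intro order_tendstoD(1)) (auto simp: pV_def)
  moreover have "eventually (\<lambda>N. real N > 4 * (1 + real k * (real k + 1)) / pV) sequentially"
    using filterlim_real_sequentially by (simp add: filterlim_at_top_dense)
  ultimately have "eventually (\<lambda>N. c * real N \<le> real (sel N)) sequentially"
  proof eventually_elim
    case (elim N)
    have "4 * (1 + real k * (real k + 1)) / pV > 0" using pV by (simp add: add_pos_nonneg)
    then have N_pos: "real N > 0" using elim(2) by linarith
    have "pV / 2 * real N < real (occ V (prefix_of \<alpha> N))"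
      using elim(1) N_pos by (simp add: field_simps)
    also have "\<dots> \<le> real (card {i. i < N \<and> window \<alpha> i k = V}) + 1"
      using occ_prefix_of_le_card_starts[of V \<alpha> N] by (simp add: k_def)
    also have "\<dots> \<le> real (Suc k * sel (N + k)) + 1"
    proof -
      have "card {i. i < N \<and> window \<alpha> i k = V} \<le> Suc k * sel (N + k)"
        unfolding sel_def k_def by (rule card_starts_le_count_below) (rule visit)
      then show ?thesis by (simp only: of_nat_le_iff add_le_cancel_right)
    qed
    also have "\<dots> \<le> (real k + 1) * (real (sel N) + real k) + 1"
    proof -
      have "real (sel (N + k)) \<le> real (sel N) + real k"
        using count_below_add_le[of _ N k] unfolding sel_def by (metis of_nat_add of_nat_le_iff)
      then have "real (Suc k * sel (N + k)) \<le> (real k + 1) * (real (sel N) + real k)"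
        using mult_left_mono[of "real (sel (N + k))" "real (sel N) + real k" "real k + 1"]
        by (simp add: algebra_simps)
      then show ?thesis by simp
    qed
    finally have "pV / 2 * real N < (real k + 1) * real (sel N) + real k * (real k + 1) + 1"
      by (simp add: algebra_simps)
    moreover have "pV / 4 * real N > real k * (real k + 1) + 1"
      using elim(2) pV by (simp add: field_simps)
    ultimately have "pV / 4 * real N < (real k + 1) * real (sel N)"
      by linarith
    then show ?case by (simp add: c_def field_simps)
  qed
  moreover have "c > 0" using pV by (simp add: c_def)
  ultimately show ?thesis
    unfolding sel_def by blast
qed

end

section \<open>Finite-state selection preserves genericity for positive Bernoulli measures\<close>

lemma tendsto_div_of_lower_density:
  fixes X :: "nat \<Rightarrow> real" and s :: "nat \<Rightarrow> nat"
  assumes X: "(\<lambda>N. X N / real N) \<longlonglongrightarrow> 0" and c: "c > 0"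
    and s: "eventually (\<lambda>N. c * real N \<le> real (s N)) sequentially"
  shows "(\<lambda>N. X N / real (s N)) \<longlonglongrightarrow> 0"
proof (rule Lim_null_comparison)
  show "eventually (\<lambda>N. norm (X N / real (s N)) \<le> \<bar>X N / real N\<bar> / c) sequentially"
    using s eventually_gt_at_top[of 0]
  proof eventually_elim
    case (elim N)
    have cN: "0 < c * real N" using c elim by simp
    then have "0 < real (s N)" using elim(1) by linarith
    with elim(1) cN have "\<bar>X N\<bar> / real (s N) \<le> \<bar>X N\<bar> / (c * real N)"
      by (intro divide_left_mono) simp_all
    then show ?case
      by (simp add: abs_divide mult.commute)
  qed
  show "(\<lambda>N. \<bar>X N / real N\<bar> / c) \<longlonglongrightarrow> 0"
    using tendsto_divide[OF tendsto_rabs_zero[OF X] tendsto_const[of c]] c by simp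
qed

lemma tendsto_bounded_diff_div_0:
  fixes X Y :: "nat \<Rightarrow> real" and s :: "nat \<Rightarrow> nat"
  assumes "\<And>N. \<bar>X N - Y N\<bar> \<le> 1" and "filterlim s at_top sequentially"
  shows "(\<lambda>N. (X N - Y N) / real (s N)) \<longlonglongrightarrow> 0"
proof (rule Lim_null_comparison)
  show "eventually (\<lambda>N. norm ((X N - Y N) / real (s N)) \<le> 1 / real (s N)) sequentially"
    using assms(1) by (intro always_eventually allI) (simp add: abs_divide divide_right_mono)
  show "(\<lambda>N. 1 / real (s N)) \<longlonglongrightarrow> 0"
    using filterlim_compose[OF lim_1_over_n assms(2)] by simp
qed

text \<open>The product of an automaton with the tracker of the overlaps of \<open>u\<close> with the
  subsequence selected so far.\<close>
definition track_overlaps :: "('s \<Rightarrow> 'a \<Rightarrow> 's) \<Rightarrow> 's set \<Rightarrow> 'a list \<Rightarrow> 's \<times> nat set \<Rightarrow> 'a \<Rightarrow> 's \<times> nat set" where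
  "track_overlaps \<delta> F u = (\<lambda>(q, J) a. (\<delta> q a, if q \<in> F then overlaps_step u J a else J))"

lemma run_from_track_overlaps:
  assumes S: "S = {t. run_from \<delta> q0 \<alpha> t \<in> F}" "infinite S"
  shows "run_from (track_overlaps \<delta> F u) (q0, {0}) \<alpha> t
    = (run_from \<delta> q0 \<alpha> t, overlaps u (prefix_of (\<alpha> \<circ> enumerate S) (count_below (\<lambda>t. t \<in> S) t)))"
proof (induct t)
  case 0 then show ?case by (simp add: prefix_of_def overlaps_Nil)
next
  case (Suc t)
  show ?case
  proof (cases "t \<in> S")
    case True
    then have "(\<alpha> \<circ> enumerate S) (count_below (\<lambda>t. t \<in> S) t) = \<alpha> t"
      using enumerate_count_below[OF S(2)] by simp
    with Suc True show ?thesis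
      by (simp add: track_overlaps_def prefix_of_Suc overlaps_snoc count_below_Suc S(1))
  next
    case False
    with Suc show ?thesis
      by (simp add: track_overlaps_def count_below_Suc S(1))
  qed
qed

definition tracked_final :: "'s set \<Rightarrow> 'a list \<Rightarrow> ('s \<times> nat set) set" where
  "tracked_final F u = {(q, J). q \<in> F \<and> length u \<in> J}"

lemma count_below_tracked_final:
  fixes u :: "'a list"
  assumes S_def: "S = {t. run_from \<delta> q0 \<alpha> t \<in> F}" and S: "infinite S"
  defines "r \<equiv> run_from (track_overlaps \<delta> F u) (q0, {0}) \<alpha>"
    and "\<beta> \<equiv> \<alpha> \<circ> enumerate S" and "s \<equiv> count_below (\<lambda>t. t \<in> S)"
  shows "count_below (\<lambda>t. r t \<in> tracked_final F u \<and> \<alpha> t = x) N = occ (u @ [x]) (prefix_of \<beta> (s N))"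
    and "count_below (\<lambda>t. r t \<in> tracked_final F u) N
      = card {m. m < s N \<and> length u \<in> overlaps u (prefix_of \<beta> m)}"
proof -
  have final: "r t \<in> tracked_final F u \<longleftrightarrow> t \<in> S \<and> length u \<in> overlaps u (prefix_of \<beta> (s t))" for t
    using run_from_track_overlaps[OF S_def S] by (simp add: r_def tracked_final_def S_def \<beta>_def s_def)
  have "count_below (\<lambda>t. r t \<in> tracked_final F u \<and> \<alpha> t = x) N
      = card {t. t < N \<and> t \<in> S \<and> (\<lambda>m a. length u \<in> overlaps u (prefix_of \<beta> m) \<and> a = x) (s t) (\<alpha> t)}"
    unfolding count_below_def final by (intro arg_cong[where f=card]) auto
  also have "\<dots> = card {m. m < s N \<and> length u \<in> overlaps u (prefix_of \<beta> m) \<and> \<beta> m = x}"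
    unfolding s_def \<beta>_def by (rule card_below_enumerate_reindex[OF S])
  finally show "count_below (\<lambda>t. r t \<in> tracked_final F u \<and> \<alpha> t = x) N = occ (u @ [x]) (prefix_of \<beta> (s N))"
    by (simp add: card_overlap_positions_snoc)
  have "count_below (\<lambda>t. r t \<in> tracked_final F u) N
      = card {t. t < N \<and> t \<in> S \<and> (\<lambda>m a. length u \<in> overlaps u (prefix_of \<beta> m)) (s t) (\<alpha> t)}"
    unfolding count_below_def final by (intro arg_cong[where f=card]) auto
  also have "\<dots> = card {m. m < s N \<and> length u \<in> overlaps u (prefix_of \<beta> m)}"
    unfolding s_def \<beta>_def by (rule card_below_enumerate_reindex[OF S])
  finally show "count_below (\<lambda>t. r t \<in> tracked_final F u) N
      = card {m. m < s N \<and> length u \<in> overlaps u (prefix_of \<beta> m)}" .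
qed

context generic_bernoulli_automaton
begin

text \<open>The gain of the tracked automaton counts the selected occurrences of \<open>u x\<close> minus
  \<open>p x\<close> times those of \<open>u\<close>; its average vanishes, and the selected positions have
  positive density.\<close>
lemma selected_frequency_snoc:
  fixes u :: "'a list"
  defines "S \<equiv> {t. run_from \<delta> q0 \<alpha> t \<in> F}"
  defines "\<beta> \<equiv> \<alpha> \<circ> enumerate S" and "s \<equiv> count_below (\<lambda>t. t \<in> S)"
  assumes S: "infinite S"
    and freq_u: "(\<lambda>N. real (occ u (prefix_of \<beta> (s N))) / real (s N)) \<longlonglongrightarrow> prod_list (map p u)"
  shows "(\<lambda>N. real (occ (u @ [x]) (prefix_of \<beta> (s N))) / real (s N)) \<longlonglongrightarrow> prod_list (map p u) * p x"
proof -
  interpret tracked: generic_bernoulli_automaton p \<alpha> "Q \<times> Pow {0..length u}"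
    "track_overlaps \<delta> F u" "(q0, {0})" "tracked_final F u" x
  proof unfold_locales
    show "track_overlaps \<delta> F u q a \<in> Q \<times> Pow {0..length u}" if "q \<in> Q \<times> Pow {0..length u}" for q a
      using that \<delta>_in_Q overlaps_step_subset[of u _ a] by (auto simp: track_overlaps_def split: prod.splits)
  qed (use p_pos p_has_sum frequency finite_Q q0_in_Q in auto)
  define A where "A = count_below (\<lambda>t. run_from (track_overlaps \<delta> F u) (q0, {0}) \<alpha> t \<in> tracked_final F u \<and> \<alpha> t = x)"
  define B where "B = count_below (\<lambda>t. run_from (track_overlaps \<delta> F u) (q0, {0}) \<alpha> t \<in> tracked_final F u)"
  have A: "A N = occ (u @ [x]) (prefix_of \<beta> (s N))"
    and B: "B N = card {m. m < s N \<and> length u \<in> overlaps u (prefix_of \<beta> m)}" for N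
    using count_below_tracked_final[OF S_def[THEN meta_eq_to_obj_eq] S] by (simp_all add: A_def B_def \<beta>_def s_def)
  have "(\<Sum>t<N. tracked.gain_seq t)
      = (\<Sum>t<N. (if run_from (track_overlaps \<delta> F u) (q0, {0}) \<alpha> t \<in> tracked_final F u \<and> \<alpha> t = x then 1 else 0)
          - p x * (if run_from (track_overlaps \<delta> F u) (q0, {0}) \<alpha> t \<in> tracked_final F u then 1 else 0))" for N
    by (intro sum.cong) (auto simp: tracked.gain_seq_def tracked.gain_def)
  then have gain: "(\<Sum>t<N. tracked.gain_seq t) = real (A N) - p x * real (B N)" for N
    by (simp add: sum_subtractf sum_distrib_left[symmetric] sum_indicator_eq_count_below A_def B_def)
  have "\<exists>c>0. eventually (\<lambda>N. c * real N \<le> real (s N)) sequentially"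
    unfolding s_def S_def mem_Collect_eq by (rule selected_positive_lower_density) (use S in \<open>simp add: S_def\<close>)
  then have lim_gain: "(\<lambda>N. (real (A N) - p x * real (B N)) / real (s N)) \<longlonglongrightarrow> 0"
    using tendsto_div_of_lower_density[OF tracked.gain_seq_average_tendsto_0] by (auto simp: gain)
  have "\<bar>real (B N) - real (occ u (prefix_of \<beta> (s N)))\<bar> \<le> 1" for N
    using card_overlap_positions_le[where M="s N" and u=u and \<beta>=\<beta>] B[of N] by linarith
  then have lim_B: "(\<lambda>N. (real (B N) - real (occ u (prefix_of \<beta> (s N)))) / real (s N)) \<longlonglongrightarrow> 0"
    by (rule tendsto_bounded_diff_div_0) (unfold s_def, rule filterlim_count_below[OF S])
  have "real (occ (u @ [x]) (prefix_of \<beta> (s N))) / real (s N)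
      = (real (A N) - p x * real (B N)) / real (s N)
        + p x * ((real (B N) - real (occ u (prefix_of \<beta> (s N)))) / real (s N))
        + p x * (real (occ u (prefix_of \<beta> (s N))) / real (s N))" for N
    by (simp add: A diff_divide_distrib add_divide_distrib algebra_simps)
  moreover have "(\<lambda>N. (real (A N) - p x * real (B N)) / real (s N)
        + p x * ((real (B N) - real (occ u (prefix_of \<beta> (s N)))) / real (s N))
        + p x * (real (occ u (prefix_of \<beta> (s N))) / real (s N)))
      \<longlonglongrightarrow> 0 + p x * 0 + p x * prod_list (map p u)"
    by (intro tendsto_intros lim_gain lim_B freq_u)
  ultimately show ?thesis
    by (simp add: mult.commute)
qed

end

lemma selected_frequency:
  fixes \<delta> :: "'s \<Rightarrow> 'a \<Rightarrow> 's" and p :: "'a \<Rightarrow> real"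
  assumes p_pos: "\<And>a. 0 < p a" and p_has_sum: "(p has_sum 1) UNIV"
    and frequency: "\<And>w. (\<lambda>N. real (occ w (prefix_of \<alpha> N)) / real N) \<longlonglongrightarrow> prod_list (map p w)"
    and finite_Q: "finite Q" and q0_in_Q: "q0 \<in> Q" and \<delta>_in_Q: "\<And>s a. s \<in> Q \<Longrightarrow> \<delta> s a \<in> Q"
    and S_def: "S = {t. run_from \<delta> q0 \<alpha> t \<in> F}" and S: "infinite S"
  shows "(\<lambda>N. real (occ u (prefix_of (\<alpha> \<circ> enumerate S) N)) / real N) \<longlonglongrightarrow> prod_list (map p u)"
proof (rule tendsto_of_compose_count_below[OF S])
  show "(\<lambda>N. real (occ u (prefix_of (\<alpha> \<circ> enumerate S) (count_below (\<lambda>t. t \<in> S) N)))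
      / real (count_below (\<lambda>t. t \<in> S) N)) \<longlonglongrightarrow> prod_list (map p u)"
  proof (induct u rule: rev_induct)
    case Nil
    show ?case
      using tendsto_compose_count_below[OF S LIMSEQ_Suc_n_over_n] by (simp add: occ_Nil_prefix_of)
  next
    case (snoc x u)
    interpret generic_bernoulli_automaton p \<alpha> Q \<delta> q0 F x
      using assms by unfold_locales auto
    show ?case
      using selected_frequency_snoc[OF S[unfolded S_def] snoc[unfolded S_def]]
      by (simp add: S_def mult.commute o_def)
  qed
qed

theorem bernoulli_selection_preserves_genericity:
  fixes \<nu> :: "(nat \<Rightarrow> 'a) measure"
  assumes bernoulli: "bernoulli_measure \<nu>" and admissible: "\<And>w. admissible \<nu> w"
    and dfa: "is_dfa Q \<delta> qs F" and generic: "generic \<nu> \<alpha>" and infinite: "infinite (selected \<delta> qs F \<alpha>)"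
  shows "generic \<nu> (select \<delta> qs F \<alpha>)"
proof -
  obtain p :: "'a \<Rightarrow> real" where p_has_sum: "(p has_sum 1) UNIV"
    and cyl: "\<And>w. measure \<nu> (cyl w) = prod_list (map p w)"
    using bernoulli unfolding bernoulli_measure_def by blast
  have "0 < p a" for a
    using admissible[of "[a]"] cyl[of "[a]"] by (simp add: admissible_def)
  moreover have "(\<lambda>N. real (occ w (prefix_of \<alpha> N)) / real N) \<longlonglongrightarrow> prod_list (map p w)" for w
    using generic admissible cyl unfolding generic_def by metis
  ultimately show ?thesis
    using selected_frequency[OF _ p_has_sum _ _ _ _ selected_eq infinite] dfa
    unfolding generic_def select_def is_dfa_def cyl by blast
qed

section \<open>Cylinder measures and generic sequences\<close>

lemma cyl_Nil: "cyl [] = UNIV"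
  by (simp add: cyl_def)

lemma cyl_snoc_subset: "cyl (w @ [a]) \<subseteq> cyl w"
  by (auto simp: cyl_def nth_append)

lemma disjoint_cyl_snoc: "a \<noteq> b \<Longrightarrow> cyl (w @ [a]) \<inter> cyl (w @ [b]) = {}"
  by (auto simp: cyl_def dest!: spec[of _ "length w"])

lemma in_cyl_snoc: "\<beta> \<in> cyl w \<Longrightarrow> \<beta> \<in> cyl (w @ [\<beta> (length w)])"
  by (auto simp: cyl_def nth_append less_Suc_eq)

locale cylinder_prob_space = prob_space \<nu> for \<nu> :: "(nat \<Rightarrow> 'a::countable) measure" +
  assumes cylinder_measure: "cylinder_measure \<nu>"
begin

lemma sets_cyl [measurable]: "cyl w \<in> sets \<nu>"
  using cylinder_measure unfolding cylinder_measure_def by auto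

lemma measure_cyl_Nil: "measure \<nu> (cyl []) = 1"
  using cylinder_measure prob_space by (simp add: cylinder_measure_def cyl_Nil)

lemma measure_cyl_snoc_le: "measure \<nu> (cyl (w @ [a])) \<le> measure \<nu> (cyl w)"
  by (rule finite_measure_mono[OF cyl_snoc_subset sets_cyl])

lemma sum_measure_cyl_snoc:
  "finite A \<Longrightarrow> (\<Sum>b\<in>A. measure \<nu> (cyl (w @ [b]))) = measure \<nu> (\<Union>b\<in>A. cyl (w @ [b]))"
  by (rule finite_measure_finite_Union[symmetric])
     (auto simp: disjoint_family_on_def disjoint_cyl_snoc)

lemma sum_measure_cyl_snoc_le:
  "finite A \<Longrightarrow> (\<Sum>b\<in>A. measure \<nu> (cyl (w @ [b]))) \<le> measure \<nu> (cyl w)"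
  by (simp add: sum_measure_cyl_snoc finite_measure_mono cyl_snoc_subset UN_least)

text \<open>Continuity from below along an enumeration of the countable alphabet.\<close>
lemma exists_finite_sum_measure_cyl_snoc_gt:
  assumes "\<epsilon> > 0"
  shows "\<exists>A. finite A \<and> measure \<nu> (cyl w) - \<epsilon> < (\<Sum>b\<in>A. measure \<nu> (cyl (w @ [b])))"
proof -
  define U where "U n = (\<Union>b\<in>to_nat -` {..<n}. cyl (w @ [b]))" for n
  have fin: "finite (to_nat -` {..<n} :: 'a set)" for n
    by (rule finite_vimageI[OF finite_lessThan inj_to_nat])
  have "(\<lambda>n. measure \<nu> (U n)) \<longlonglongrightarrow> measure \<nu> (\<Union>n. U n)"
  proof (rule finite_Lim_measure_incseq)
    show "incseq U"
      unfolding incseq_def U_def by (intro allI impI UN_mono) auto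
  qed (auto simp: U_def fin intro!: sets.finite_UN)
  moreover have "(\<Union>n. U n) = cyl w"
    using cyl_snoc_subset in_cyl_snoc
    by (fastforce simp: U_def intro!: exI[of _ "Suc (to_nat _)"])
  ultimately have "eventually (\<lambda>n. measure \<nu> (cyl w) - \<epsilon> < measure \<nu> (U n)) sequentially"
    using assms by (intro order_tendstoD(1)) auto
  then obtain n where "measure \<nu> (cyl w) - \<epsilon> < measure \<nu> (U n)"
    by (metis eventually_sequentially order_refl)
  then show ?thesis
    using sum_measure_cyl_snoc[OF fin[of n], of w] fin[of n] unfolding U_def by metis
qed

lemma has_sum_measure_cyl_letters: "((\<lambda>a. measure \<nu> (cyl [a])) has_sum 1) UNIV"
  unfolding has_sum_def
proof (rule tendstoI)
  fix \<epsilon> :: real assume "\<epsilon> > 0"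
  then obtain A where A: "finite A" "1 - \<epsilon> < (\<Sum>b\<in>A. measure \<nu> (cyl [b]))"
    using exists_finite_sum_measure_cyl_snoc_gt[of \<epsilon> "[]"] measure_cyl_Nil by auto
  show "eventually (\<lambda>B. dist (\<Sum>a\<in>B. measure \<nu> (cyl [a])) 1 < \<epsilon>) (finite_subsets_at_top UNIV)"
    unfolding eventually_finite_subsets_at_top
  proof (intro exI[of _ A] conjI allI impI)
    fix B assume B: "finite B \<and> A \<subseteq> B \<and> B \<subseteq> UNIV"
    then have "(\<Sum>b\<in>A. measure \<nu> (cyl [b])) \<le> (\<Sum>b\<in>B. measure \<nu> (cyl [b]))"
      by (intro sum_mono2) auto
    moreover have "(\<Sum>b\<in>B. measure \<nu> (cyl ([] @ [b]))) \<le> 1"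
      using B sum_measure_cyl_snoc_le[of B "[]"] measure_cyl_Nil by simp
    ultimately show "dist (\<Sum>a\<in>B. measure \<nu> (cyl [a])) 1 < \<epsilon>"
      using A(2) by (simp add: dist_real_def)
  qed (use A in auto)
qed

lemma exists_letter_measure_pos: "\<exists>c. measure \<nu> (cyl [c]) > 0"
proof (rule ccontr)
  assume "\<nexists>c. measure \<nu> (cyl [c]) > 0"
  then have "measure \<nu> (cyl [c]) = 0" for c
    by (simp add: zero_less_measure_iff)
  then have "((\<lambda>_ :: 'a. 0 :: real) has_sum 1) UNIV"
    using has_sum_measure_cyl_letters by simp
  moreover have "((\<lambda>_ :: 'a. 0 :: real) has_sum 0) UNIV"
    by (rule has_sum_0) simp
  ultimately show False
    using has_sum_unique by fastforce
qed

text \<open>Genericity only speaks about admissible words; for a null cylinder the frequency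
  tends to \<open>0\<close> because the admissible one-letter extensions of its longest admissible
  prefix already exhaust the frequency of that prefix.\<close>
lemma generic_frequency_null:
  assumes generic: "generic \<nu> \<alpha>" and null: "measure \<nu> (cyl v) = 0"
  shows "(\<lambda>N. real (occ v (prefix_of \<alpha> N)) / real N) \<longlonglongrightarrow> 0"
  using null
proof (induct v rule: rev_induct)
  case Nil then show ?case using measure_cyl_Nil by simp
next
  case (snoc a w)
  show ?case
  proof (cases "measure \<nu> (cyl w) = 0")
    case True
    show ?thesis
    proof (rule Lim_null_comparison)
      show "eventually (\<lambda>N. norm (real (occ (w @ [a]) (prefix_of \<alpha> N)) / real N)
          \<le> real (occ w (prefix_of \<alpha> N)) / real N) sequentially"
        using occ_snoc_prefix_of_le[of w a \<alpha>] by (intro always_eventually allI) (simp add: divide_right_mono)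
      show "(\<lambda>N. real (occ w (prefix_of \<alpha> N)) / real N) \<longlonglongrightarrow> 0" using snoc True by simp
    qed
  next
    case False
    then have "admissible \<nu> w"
      by (simp add: admissible_def zero_less_measure_iff)
    with generic have freq_w: "(\<lambda>N. real (occ w (prefix_of \<alpha> N)) / real N) \<longlonglongrightarrow> measure \<nu> (cyl w)"
      unfolding generic_def by blast
    show ?thesis
    proof (rule tendstoI)
      fix \<epsilon> :: real assume \<epsilon>: "\<epsilon> > 0"
      obtain A0 where A0: "finite A0" "measure \<nu> (cyl w) - \<epsilon>/2 < (\<Sum>b\<in>A0. measure \<nu> (cyl (w @ [b])))"
        using exists_finite_sum_measure_cyl_snoc_gt[of "\<epsilon>/2" w] \<epsilon> by auto
      define A where "A = {b\<in>A0. admissible \<nu> (w @ [b])}"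
      have A: "finite A" "a \<notin> A" using A0 snoc.prems by (simp_all add: A_def admissible_def)
      have sum_A: "(\<Sum>b\<in>A0. measure \<nu> (cyl (w @ [b]))) = (\<Sum>b\<in>A. measure \<nu> (cyl (w @ [b])))"
        unfolding A_def admissible_def
        by (rule sum.mono_neutral_right[OF A0(1)]) (auto simp: less_le)
      have "(\<lambda>N. real (occ w (prefix_of \<alpha> N)) / real N
          - (\<Sum>b\<in>A. real (occ (w @ [b]) (prefix_of \<alpha> N)) / real N))
          \<longlonglongrightarrow> measure \<nu> (cyl w) - (\<Sum>b\<in>A. measure \<nu> (cyl (w @ [b])))"
        using generic unfolding generic_def A_def by (intro tendsto_diff freq_w tendsto_sum) auto
      then have "eventually (\<lambda>N. real (occ w (prefix_of \<alpha> N)) / real N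
          - (\<Sum>b\<in>A. real (occ (w @ [b]) (prefix_of \<alpha> N)) / real N) < \<epsilon>) sequentially"
        by (rule order_tendstoD(2)) (use A0(2) sum_A \<epsilon> in linarith)
      then show "eventually (\<lambda>N. dist (real (occ (w @ [a]) (prefix_of \<alpha> N)) / real N) 0 < \<epsilon>) sequentially"
      proof eventually_elim
        case (elim N)
        have "real (occ (w @ [a]) (prefix_of \<alpha> N)) + (\<Sum>b\<in>A. real (occ (w @ [b]) (prefix_of \<alpha> N)))
            \<le> real (occ w (prefix_of \<alpha> N))"
          using sum_occ_snoc_prefix_of_le[of "insert a A" w \<alpha> N] A by (simp flip: of_nat_sum of_nat_add)
        then have "real (occ (w @ [a]) (prefix_of \<alpha> N)) / real N
            + (\<Sum>b\<in>A. real (occ (w @ [b]) (prefix_of \<alpha> N)) / real N)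
            \<le> real (occ w (prefix_of \<alpha> N)) / real N"
          by (simp add: sum_divide_distrib[symmetric] add_divide_distrib[symmetric] divide_right_mono)
        then show ?case using elim by (simp add: dist_real_def)
      qed
    qed
  qed
qed

lemma generic_frequency:
  assumes "generic \<nu> \<alpha>"
  shows "(\<lambda>N. real (occ v (prefix_of \<alpha> N)) / real N) \<longlonglongrightarrow> measure \<nu> (cyl v)"
proof (cases "admissible \<nu> v")
  case False
  then have "measure \<nu> (cyl v) = 0"
    by (simp add: admissible_def zero_less_measure_iff)
  then show ?thesis using generic_frequency_null[OF assms] by simp
qed (use assms in \<open>simp add: generic_def\<close>)

end

section \<open>Selection-invariant measures are positive Bernoulli measures\<close>

definition dfa_selection_preserves_genericity :: "(nat \<Rightarrow> 'a) measure \<Rightarrow> bool" where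
  "dfa_selection_preserves_genericity \<nu> \<longleftrightarrow>
    (\<forall>Q \<delta> qs F \<alpha>. is_dfa Q \<delta> qs F \<and> generic \<nu> \<alpha> \<and> infinite (selected \<delta> qs F \<alpha>)
       \<longrightarrow> generic \<nu> (select \<delta> qs F \<alpha>))"

lemma dfa_selection_preserves_genericityD:
  "dfa_selection_preserves_genericity \<nu> \<Longrightarrow> is_dfa Q \<delta> qs F \<Longrightarrow> generic \<nu> \<alpha>
    \<Longrightarrow> infinite (selected \<delta> qs F \<alpha>) \<Longrightarrow> generic \<nu> (select \<delta> qs F \<alpha>)"
  unfolding dfa_selection_preserves_genericity_def by blast

text \<open>The states of the overlap tracker, finite sets of overlap lengths, are coded as natural
  numbers.\<close>
lemma exists_dfa_selecting_after_occurrences: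
  "\<exists>Q \<delta> qs F. is_dfa Q \<delta> qs F \<and>
     (\<forall>\<alpha>. selected \<delta> qs F \<alpha> = {t. length w \<in> overlaps w (prefix_of \<alpha> t)})"
proof -
  define \<delta> where "\<delta> q y = set_encode (overlaps_step w (set_decode q) y)" for q y
  define Fs where "Fs = {J. J \<subseteq> {0..length w} \<and> length w \<in> J}"
  have finite_overlaps: "finite (overlaps w v)" for v
    using overlaps_subset[of w v] finite_subset by blast
  define qs where "qs = set_encode {0}"
  have run: "run \<delta> qs \<alpha> t = set_encode (overlaps w (prefix_of \<alpha> t))" for \<alpha> t
    by (induct t) (simp_all add: qs_def \<delta>_def prefix_of_def[of _ 0] overlaps_Nil prefix_of_Suc
        overlaps_snoc finite_overlaps)
  have "set_encode (overlaps w (prefix_of \<alpha> t)) \<in> set_encode ` Fs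
      \<longleftrightarrow> length w \<in> overlaps w (prefix_of \<alpha> t)" for \<alpha> t
    using overlaps_subset[of w] finite_overlaps
    by (subst inj_on_image_mem_iff[OF inj_on_set_encode]) (auto simp: Fs_def intro: finite_subset)
  then have "selected \<delta> qs (set_encode ` Fs) \<alpha> = {t. length w \<in> overlaps w (prefix_of \<alpha> t)}" for \<alpha>
    by (simp add: selected_def run)
  moreover have "is_dfa (set_encode ` Pow {0..length w}) \<delta> qs (set_encode ` Fs)"
    unfolding is_dfa_def
  proof (intro conjI ballI allI)
    show "qs \<in> set_encode ` Pow {0..length w}"
      unfolding qs_def by (rule imageI) simp
    fix q y assume "q \<in> set_encode ` Pow {0..length w}"
    then obtain J where "J \<subseteq> {0..length w}" "q = set_encode J" by auto
    moreover from this have "finite J" using finite_subset by blast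
    ultimately show "\<delta> q y \<in> set_encode ` Pow {0..length w}"
      using overlaps_step_subset[of w J y] by (auto simp: \<delta>_def)
  qed (auto simp: Fs_def)
  ultimately show ?thesis by blast
qed

lemma frequency_overlap_positions:
  assumes "(\<lambda>N. real (occ w (prefix_of \<alpha> N)) / real N) \<longlonglongrightarrow> L"
  shows "(\<lambda>N. real (count_below (\<lambda>t. length w \<in> overlaps w (prefix_of \<alpha> t)) N) / real N) \<longlonglongrightarrow> L"
proof -
  have "\<bar>real (count_below (\<lambda>t. length w \<in> overlaps w (prefix_of \<alpha> t)) N)
      - real (occ w (prefix_of \<alpha> N))\<bar> \<le> 1" for N
    using card_overlap_positions_le[where M=N and u=w and \<beta>=\<alpha>]
    unfolding count_below_def by linarith
  then have "(\<lambda>N. (real (count_below (\<lambda>t. length w \<in> overlaps w (prefix_of \<alpha> t)) N)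
      - real (occ w (prefix_of \<alpha> N))) / real N) \<longlonglongrightarrow> 0"
    by (rule tendsto_bounded_diff_div_0[where s="\<lambda>N. N"]) (rule filterlim_ident)
  from tendsto_add[OF this assms] show ?thesis
    by (simp add: diff_divide_distrib)
qed

lemma occ_singleton_select_after_occurrences:
  fixes w :: "'a list" and \<alpha> :: "nat \<Rightarrow> 'a"
  defines "S \<equiv> {t. length w \<in> overlaps w (prefix_of \<alpha> t)}"
  assumes S: "infinite S"
  shows "occ [a] (prefix_of (\<alpha> \<circ> enumerate S) (count_below (\<lambda>t. t \<in> S) N)) = occ (w @ [a]) (prefix_of \<alpha> N)"
proof -
  have "occ [a] (prefix_of (\<alpha> \<circ> enumerate S) (count_below (\<lambda>t. t \<in> S) N))
      = card {m. m < count_below (\<lambda>t. t \<in> S) N \<and> (\<lambda>m y. y = a) m ((\<alpha> \<circ> enumerate S) m)}"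
    by (simp add: occ_singleton_prefix_of)
  also have "\<dots> = card {t. t < N \<and> t \<in> S \<and> \<alpha> t = a}"
    by (rule card_below_enumerate_reindex[OF S, symmetric])
  also have "\<dots> = card {m. m < N \<and> length w \<in> overlaps w (prefix_of \<alpha> m) \<and> \<alpha> m = a}"
    by (intro arg_cong[where f=card]) (auto simp: S_def)
  finally show ?thesis
    by (simp only: card_overlap_positions_snoc)
qed

lemma infinite_if_frequency_pos:
  assumes "(\<lambda>N. real (count_below (\<lambda>t. t \<in> S) N) / real N) \<longlonglongrightarrow> L" and "L > 0"
  shows "infinite S"
proof
  assume "finite S"
  then have "real (count_below (\<lambda>t. t \<in> S) N) / real N \<le> real (card S) / real N" for N
    by (auto simp: count_below_def intro!: divide_right_mono card_mono)
  moreover have "(\<lambda>N. real (card S) / real N) \<longlonglongrightarrow> 0"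
    by (rule tendsto_divide_0[OF tendsto_const])
       (rule filterlim_at_top_imp_at_infinity[OF filterlim_real_sequentially])
  ultimately have "L \<le> 0"
    using assms(1) by (intro LIMSEQ_le) auto
  with \<open>L > 0\<close> show False by simp
qed

context cylinder_prob_space
begin

text \<open>Selecting the letters that follow occurrences of \<open>w\<close> yields a generic sequence, in
  which \<open>a\<close> has frequency \<open>\<nu>[a]\<close>; in \<open>\<alpha>\<close> this is the conditional frequency of \<open>w a\<close>
  given \<open>w\<close>.\<close>
lemma measure_cyl_snoc_eq_mult:
  assumes preserves: "dfa_selection_preserves_genericity \<nu>" and generic: "generic \<nu> \<alpha>"
    and a: "admissible \<nu> [a]"
  shows "measure \<nu> (cyl (w @ [a])) = measure \<nu> (cyl w) * measure \<nu> (cyl [a])"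
proof (cases "admissible \<nu> w")
  case False
  then show ?thesis
    using measure_cyl_snoc_le[of w a] measure_nonneg[of \<nu> "cyl (w @ [a])"]
    by (simp add: admissible_def zero_less_measure_iff)
next
  case True
  define S where "S = {t. length w \<in> overlaps w (prefix_of \<alpha> t)}"
  define s where "s = count_below (\<lambda>t. t \<in> S)"
  obtain Q \<delta> qs F where dfa: "is_dfa Q \<delta> qs F" and sel: "selected \<delta> qs F \<alpha> = S"
    using exists_dfa_selecting_after_occurrences[of w] unfolding S_def by blast
  have freq_s: "(\<lambda>N. real (s N) / real N) \<longlonglongrightarrow> measure \<nu> (cyl w)"
    unfolding s_def S_def mem_Collect_eq
    by (rule frequency_overlap_positions[OF generic_frequency[OF generic]])
  have S: "infinite S"
    using infinite_if_frequency_pos[OF freq_s[unfolded s_def]] True by (simp add: admissible_def)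
  have "generic \<nu> (\<alpha> \<circ> enumerate S)"
    using dfa_selection_preserves_genericityD[OF preserves dfa generic] S sel
    by (simp add: select_def)
  then have "(\<lambda>N. real (occ [a] (prefix_of (\<alpha> \<circ> enumerate S) N)) / real N) \<longlonglongrightarrow> measure \<nu> (cyl [a])"
    using a unfolding generic_def by blast
  then have "(\<lambda>N. real (occ [a] (prefix_of (\<alpha> \<circ> enumerate S) (s N))) / real (s N)) \<longlonglongrightarrow> measure \<nu> (cyl [a])"
    unfolding s_def by (rule tendsto_compose_count_below[OF S])
  moreover have "occ [a] (prefix_of (\<alpha> \<circ> enumerate S) (s N)) = occ (w @ [a]) (prefix_of \<alpha> N)" for N
    using occ_singleton_select_after_occurrences S unfolding S_def s_def .
  ultimately have freq_snoc_s: "(\<lambda>N. real (occ (w @ [a]) (prefix_of \<alpha> N)) / real (s N)) \<longlonglongrightarrow> measure \<nu> (cyl [a])"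
    by simp
  have split: "real (occ (w @ [a]) (prefix_of \<alpha> N)) / real N
      = (real (occ (w @ [a]) (prefix_of \<alpha> N)) / real (s N)) * (real (s N) / real N)" for N
  proof (cases "s N = 0")
    case True
    have "occ (w @ [a]) (prefix_of \<alpha> N) \<le> s N"
      unfolding s_def count_below_def S_def card_overlap_positions_snoc[symmetric]
      by (intro card_mono) auto
    with True show ?thesis by simp
  qed simp
  have "(\<lambda>N. real (occ (w @ [a]) (prefix_of \<alpha> N)) / real N) \<longlonglongrightarrow> measure \<nu> (cyl [a]) * measure \<nu> (cyl w)"
    unfolding split by (rule tendsto_mult[OF freq_snoc_s freq_s])
  then show ?thesis
    using LIMSEQ_unique[OF generic_frequency[OF generic, of "w @ [a]"]] by (simp add: mult.commute)
qed

end

lemma generic_of_sparse_change: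
  assumes generic: "generic \<nu> \<alpha>"
    and sparse: "(\<lambda>N. real (card {t. t < N \<and> \<alpha>' t \<noteq> \<alpha> t}) / real N) \<longlonglongrightarrow> 0"
  shows "generic \<nu> \<alpha>'"
  unfolding generic_def
proof (intro allI impI)
  fix w assume "admissible \<nu> w"
  with generic have freq: "(\<lambda>N. real (occ w (prefix_of \<alpha> N)) / real N) \<longlonglongrightarrow> measure \<nu> (cyl w)"
    unfolding generic_def by blast
  define D where "D N = card {t. t < N \<and> \<alpha>' t \<noteq> \<alpha> t}" for N
  have "(\<lambda>N. real (occ w (prefix_of \<alpha>' N)) / real N - real (occ w (prefix_of \<alpha> N)) / real N) \<longlonglongrightarrow> 0"
  proof (rule Lim_null_comparison)
    show "eventually (\<lambda>N. norm (real (occ w (prefix_of \<alpha>' N)) / real N - real (occ w (prefix_of \<alpha> N)) / real N)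
        \<le> real (length w) * (real (D N) / real N)) sequentially"
    proof (intro always_eventually allI)
      fix N
      have "{t. t < N \<and> \<alpha> t \<noteq> \<alpha>' t} = {t. t < N \<and> \<alpha>' t \<noteq> \<alpha> t}" by auto
      then have "occ w (prefix_of \<alpha>' N) \<le> occ w (prefix_of \<alpha> N) + length w * D N"
          "occ w (prefix_of \<alpha> N) \<le> occ w (prefix_of \<alpha>' N) + length w * D N"
        using occ_prefix_of_change_le[of w \<alpha>' N \<alpha>] occ_prefix_of_change_le[of w \<alpha> N \<alpha>']
        by (simp_all add: D_def)
      then have "real (occ w (prefix_of \<alpha>' N)) \<le> real (occ w (prefix_of \<alpha> N)) + real (length w) * real (D N)"
          "real (occ w (prefix_of \<alpha> N)) \<le> real (occ w (prefix_of \<alpha>' N)) + real (length w) * real (D N)"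
        by (metis of_nat_add of_nat_le_iff of_nat_mult)+
      then have "\<bar>real (occ w (prefix_of \<alpha>' N)) - real (occ w (prefix_of \<alpha> N))\<bar> \<le> real (length w) * real (D N)"
        by linarith
      then show "norm (real (occ w (prefix_of \<alpha>' N)) / real N - real (occ w (prefix_of \<alpha> N)) / real N)
          \<le> real (length w) * (real (D N) / real N)"
        by (simp add: diff_divide_distrib[symmetric] abs_divide divide_right_mono)
    qed
    show "(\<lambda>N. real (length w) * (real (D N) / real N)) \<longlonglongrightarrow> 0"
      using tendsto_mult_right_zero[OF sparse[folded D_def]] .
  qed
  from tendsto_add[OF this freq]
  show "(\<lambda>N. real (occ w (prefix_of \<alpha>' N)) / real N) \<longlonglongrightarrow> measure \<nu> (cyl w)" by simp
qed

definition near_squares :: "nat set" where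
  "near_squares = {t. \<exists>k\<ge>2. t = k * k \<or> t = k * k + 1}"

lemma card_squares_below_le: "real (card {k::nat. k * k < N}) \<le> sqrt (real N) + 1"
proof -
  have "{k::nat. k * k < N} \<subseteq> {..nat \<lfloor>sqrt (real N)\<rfloor>}"
  proof
    fix k assume "k \<in> {k::nat. k * k < N}"
    then have "real k ^ 2 \<le> real N" by (simp add: power2_eq_square flip: of_nat_mult)
    then have "real k \<le> sqrt (real N)" by (rule real_le_rsqrt)
    then show "k \<in> {..nat \<lfloor>sqrt (real N)\<rfloor>}" by (simp add: le_nat_floor)
  qed
  then have "card {k::nat. k * k < N} \<le> Suc (nat \<lfloor>sqrt (real N)\<rfloor>)"
    using card_mono[of "{..nat \<lfloor>sqrt (real N)\<rfloor>}"] by simp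
  moreover have "real (Suc (nat \<lfloor>sqrt (real N)\<rfloor>)) \<le> sqrt (real N) + 1"
    by simp
  ultimately show ?thesis
    by (meson of_nat_le_iff order_trans)
qed

lemma near_squares_density_0: "(\<lambda>N. real (card {t. t < N \<and> t \<in> near_squares}) / real N) \<longlonglongrightarrow> 0"
proof (rule Lim_null_comparison)
  have "real (card {t. t < N \<and> t \<in> near_squares}) \<le> 2 * sqrt (real N) + 2" for N
  proof -
    define K where "K = {k::nat. k * k < N}"
    have "finite K"
      unfolding K_def by (rule finite_subset[of _ "{..N}"]) (auto intro: order.trans[OF le_square] less_imp_le)
    have "{t. t < N \<and> t \<in> near_squares} \<subseteq> (\<lambda>k. k * k) ` K \<union> (\<lambda>k. k * k + 1) ` K"
      by (auto simp: near_squares_def K_def)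
    then have "card {t. t < N \<and> t \<in> near_squares} \<le> card ((\<lambda>k. k * k) ` K) + card ((\<lambda>k. k * k + 1) ` K)"
      using \<open>finite K\<close> by (meson card_Un_le card_mono finite_Un finite_imageI order_trans)
    also have "\<dots> \<le> card K + card K"
      by (intro add_mono card_image_le \<open>finite K\<close>)
    finally show ?thesis
      using card_squares_below_le[of N] unfolding K_def by linarith
  qed
  then show "eventually (\<lambda>N. norm (real (card {t. t < N \<and> t \<in> near_squares}) / real N)
      \<le> (2 * sqrt (real N) + 2) / real N) sequentially"
    by (intro always_eventually allI) (simp add: divide_right_mono)
  show "(\<lambda>N. (2 * sqrt (real N) + 2) / real N) \<longlonglongrightarrow> 0"
    by real_asymp
qed

lemma
  fixes b :: 'a
  shows is_dfa_after_letter: "is_dfa {0, 1} (\<lambda>_ y. if y = b then 1 else 0) 0 {1}"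
    and selected_after_letter:
      "selected (\<lambda>_ y. if y = b then 1 else 0) 0 {1} \<alpha> = {t. t \<noteq> 0 \<and> \<alpha> (t - 1) = b}"
proof -
  have "run (\<lambda>_ y. if y = b then 1 else 0) 0 \<alpha> t = (if t \<noteq> 0 \<and> \<alpha> (t - 1) = b then 1 else 0)" for t
    by (cases t) auto
  then show "selected (\<lambda>_ y. if y = b then 1 else 0) 0 {1} \<alpha> = {t. t \<noteq> 0 \<and> \<alpha> (t - 1) = b}"
    by (simp add: selected_def)
qed (simp add: is_dfa_def)

lemma enumerate_Suc_le: "infinite S \<Longrightarrow> s \<in> S \<Longrightarrow> enumerate S m < s \<Longrightarrow> enumerate S (Suc m) \<le> (s :: nat)"
  by (simp add: enumerate_Suc'' Least_le)

text \<open>After the letter \<open>b\<close> is planted exactly at the positions \<open>k\<^sup>2\<close> and \<open>k\<^sup>2 + 1\<close>,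
  the letters following a \<open>b\<close> are those at \<open>k\<^sup>2 + 1\<close> (a \<open>b\<close>) and \<open>k\<^sup>2 + 2\<close>; so the
  selected subsequence has a \<open>b\<close> in every other place.\<close>
lemma select_after_near_squares:
  assumes planted: "\<And>t. \<alpha> t = b \<longleftrightarrow> t \<in> near_squares"
  defines "S \<equiv> {t. t \<noteq> 0 \<and> \<alpha> (t - 1) = b}"
  shows "infinite S" and "\<alpha> (enumerate S m) = b \<or> \<alpha> (enumerate S (Suc m)) = b"
proof -
  have S_iff: "t \<in> S \<longleftrightarrow> (\<exists>k\<ge>2. t = k * k + 1 \<or> t = k * k + 2)" for t
    by (cases t) (auto simp: S_def planted near_squares_def)
  show S: "infinite S"
    unfolding infinite_nat_iff_unbounded
  proof
    fix m
    have "(m + 2) * (m + 2) + 1 \<in> S" unfolding S_iff by (intro exI[of _ "m + 2"]) simp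
    then show "\<exists>t>m. t \<in> S" by (intro exI[of _ "(m + 2) * (m + 2) + 1"]) simp
  qed
  obtain k where k: "k \<ge> 2" "enumerate S m = k * k + 1 \<or> enumerate S m = k * k + 2"
    using S_iff enumerate_in_set[OF S] by blast
  show "\<alpha> (enumerate S m) = b \<or> \<alpha> (enumerate S (Suc m)) = b"
  proof (cases "enumerate S m = k * k + 1")
    case True
    then show ?thesis using k by (auto simp: planted near_squares_def)
  next
    case False
    with k have m: "enumerate S m = k * k + 2" by simp
    have "(k + 1) * (k + 1) + 1 \<in> S" unfolding S_iff using k by (intro exI[of _ "k + 1"]) simp
    then have le: "enumerate S (Suc m) \<le> (k + 1) * (k + 1) + 1"
      using m k by (intro enumerate_Suc_le[OF S]) simp_all
    obtain j where j: "j \<ge> 2" "enumerate S (Suc m) = j * j + 1 \<or> enumerate S (Suc m) = j * j + 2"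
      using S_iff enumerate_in_set[OF S] by blast
    have "enumerate S m < enumerate S (Suc m)" using S by simp
    then have "k * k < j * j"
      using m j by auto
    then have "k < j"
      by (metis mult_le_mono not_less)
    then have "(k + 1) * (k + 1) \<le> j * j" using mult_le_mono[of "k + 1" j "k + 1" j] by simp
    with le j have "enumerate S (Suc m) = (k + 1) * (k + 1) + 1" by auto
    moreover have "(k + 1) * (k + 1) + 1 \<in> near_squares"
      unfolding near_squares_def using k by (intro CollectI exI[of _ "k + 1"]) auto
    ultimately show ?thesis by (simp add: planted)
  qed
qed

lemma occ_pair_eq_0_if_alternating:
  assumes "\<And>m. \<beta> m = b \<or> \<beta> (Suc m) = b" and "c \<noteq> b"
  shows "occ [c, c] (prefix_of \<beta> n) = 0"
proof -
  have "window \<beta> i 2 \<noteq> [c, c]" for i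
    using assms(1)[of i] assms(2) by (auto simp: window_def upt_rec)
  then show ?thesis
    by (simp add: occ_prefix_of numeral_2_eq_2)
qed

context cylinder_prob_space
begin

text \<open>A null letter \<open>b\<close> occurs with frequency zero, so planting it exactly at the
  density-zero set \<^const>\<open>near_squares\<close> keeps \<open>\<alpha>\<close> generic.\<close>
lemma generic_plant_near_squares:
  assumes generic: "generic \<nu> \<alpha>" and b: "measure \<nu> (cyl [b]) = 0"
  shows "generic \<nu> (\<lambda>t. if t \<in> near_squares then b else if \<alpha> t = b then c else \<alpha> t)"
    (is "generic \<nu> ?\<alpha>'")
proof (rule generic_of_sparse_change[OF generic Lim_null_comparison])
  have "card {t. t < N \<and> ?\<alpha>' t \<noteq> \<alpha> t}
      \<le> card ({t. t < N \<and> t \<in> near_squares} \<union> {t. t < N \<and> \<alpha> t = b})" for N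
    by (intro card_mono) auto
  then have "card {t. t < N \<and> ?\<alpha>' t \<noteq> \<alpha> t}
      \<le> card {t. t < N \<and> t \<in> near_squares} + occ [b] (prefix_of \<alpha> N)" for N
    unfolding occ_singleton_prefix_of by (rule order_trans[OF _ card_Un_le])
  then have "real (card {t. t < N \<and> ?\<alpha>' t \<noteq> \<alpha> t}) / real N
      \<le> real (card {t. t < N \<and> t \<in> near_squares}) / real N + real (occ [b] (prefix_of \<alpha> N)) / real N" for N
    by (simp add: add_divide_distrib[symmetric] divide_right_mono flip: of_nat_add)
  then show "eventually (\<lambda>N. norm (real (card {t. t < N \<and> ?\<alpha>' t \<noteq> \<alpha> t}) / real N)
      \<le> real (card {t. t < N \<and> t \<in> near_squares}) / real N + real (occ [b] (prefix_of \<alpha> N)) / real N)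
      sequentially"
    by simp
  show "(\<lambda>N. real (card {t. t < N \<and> t \<in> near_squares}) / real N
      + real (occ [b] (prefix_of \<alpha> N)) / real N) \<longlonglongrightarrow> 0"
    using tendsto_add[OF near_squares_density_0 generic_frequency_null[OF generic b]] by simp
qed

text \<open>Selecting the letters after each \<open>b\<close> in the planted sequence produces a generic
  sequence without the word \<open>c c\<close>, although \<open>\<nu>[c c] = \<nu>[c]\<^sup>2 > 0\<close>.\<close>
lemma admissible_letter:
  assumes preserves: "dfa_selection_preserves_genericity \<nu>" and generic: "generic \<nu> \<alpha>"
  shows "admissible \<nu> [b]"
proof (rule ccontr)
  assume "\<not> admissible \<nu> [b]"
  then have b: "measure \<nu> (cyl [b]) = 0"
    by (simp add: admissible_def zero_less_measure_iff)
  obtain c where c: "admissible \<nu> [c]"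
    using exists_letter_measure_pos unfolding admissible_def by blast
  with b have "c \<noteq> b" by (auto simp: admissible_def)
  have "admissible \<nu> [c, c]"
    using measure_cyl_snoc_eq_mult[OF preserves generic c, of "[c]"] c by (simp add: admissible_def)
  define \<alpha>' where "\<alpha>' t = (if t \<in> near_squares then b else if \<alpha> t = b then c else \<alpha> t)" for t
  have planted: "\<alpha>' t = b \<longleftrightarrow> t \<in> near_squares" for t
    using \<open>c \<noteq> b\<close> by (simp add: \<alpha>'_def)
  have "generic \<nu> \<alpha>'"
    unfolding \<alpha>'_def by (rule generic_plant_near_squares[OF generic b])
  define S where "S = {t. t \<noteq> 0 \<and> \<alpha>' (t - 1) = b}"
  have S: "infinite S" and alternating: "\<And>m. (\<alpha>' \<circ> enumerate S) m = b \<or> (\<alpha>' \<circ> enumerate S) (Suc m) = b"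
    using select_after_near_squares[OF planted] by (simp_all add: S_def)
  have "infinite (selected (\<lambda>_ y. if y = b then 1 else 0) 0 {1} \<alpha>')"
    unfolding selected_after_letter using S[unfolded S_def] .
  then have "generic \<nu> (select (\<lambda>_ y. if y = b then 1 else 0) 0 {1} \<alpha>')"
    by (rule dfa_selection_preserves_genericityD[OF preserves is_dfa_after_letter \<open>generic \<nu> \<alpha>'\<close>])
  then have "generic \<nu> (\<alpha>' \<circ> enumerate S)"
    by (simp only: select_def selected_after_letter S_def)
  then have "(\<lambda>N. real (occ [c, c] (prefix_of (\<alpha>' \<circ> enumerate S) N)) / real N) \<longlonglongrightarrow> measure \<nu> (cyl [c, c])"
    using \<open>admissible \<nu> [c, c]\<close> unfolding generic_def by blast
  then have "measure \<nu> (cyl [c, c]) = 0"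
    by (simp add: occ_pair_eq_0_if_alternating[where \<beta>="\<alpha>' \<circ> enumerate S", OF alternating \<open>c \<noteq> b\<close>]
        LIMSEQ_const_iff)
  with \<open>admissible \<nu> [c, c]\<close> show False
    by (simp add: admissible_def)
qed

theorem bernoulli_if_dfa_selection_preserves_genericity:
  assumes preserves: "dfa_selection_preserves_genericity \<nu>" and generic: "generic \<nu> \<alpha>"
  shows "bernoulli_measure \<nu> \<and> (\<forall>w. admissible \<nu> w)"
proof -
  define p where "p a = measure \<nu> (cyl [a])" for a
  have cyl_prod: "measure \<nu> (cyl w) = prod_list (map p w)" for w
  proof (induct w rule: rev_induct)
    case (snoc a w)
    then show ?case
      using measure_cyl_snoc_eq_mult[OF preserves generic admissible_letter[OF preserves generic]]
      by (simp add: p_def)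
  qed (simp add: measure_cyl_Nil)
  have "0 < p a" for a
    using admissible_letter[OF preserves generic] by (simp add: p_def admissible_def)
  then have "admissible \<nu> w" for w
    by (simp add: admissible_def cyl_prod prod_list_pos)
  moreover have "bernoulli_measure \<nu>"
    unfolding bernoulli_measure_def
  proof (intro exI[of _ p] conjI allI)
    show "0 \<le> p a" "p a \<le> 1" for a
      by (simp_all add: p_def)
    show "(p has_sum 1) UNIV"
      unfolding p_def by (rule has_sum_measure_cyl_letters)
  qed (rule cyl_prod)
  ultimately show ?thesis by blast
qed

end

theorem theorem6p3:
  fixes \<nu> :: "(nat \<Rightarrow> 'a::countable) measure"
  assumes "prob_space \<nu>"
    and "cylinder_measure \<nu>"
    and "shift_invariant \<nu>"
    and "\<exists>\<alpha>. generic \<nu> \<alpha>"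
  shows "(\<forall>Q \<delta> qs F \<alpha>. is_dfa Q \<delta> qs F \<and> generic \<nu> \<alpha> \<and> infinite (selected \<delta> qs F \<alpha>)
             \<longrightarrow> generic \<nu> (select \<delta> qs F \<alpha>))
         \<longleftrightarrow> (bernoulli_measure \<nu> \<and> (\<forall>w. admissible \<nu> w))"
  unfolding dfa_selection_preserves_genericity_def[symmetric]
proof
  assume preserves: "dfa_selection_preserves_genericity \<nu>"
  interpret cylinder_prob_space \<nu>
    using assms(1,2) by (rule cylinder_prob_space.intro[OF _ cylinder_prob_space_axioms.intro])
  obtain \<alpha> where "generic \<nu> \<alpha>" using assms(4) by blast
  with preserves show "bernoulli_measure \<nu> \<and> (\<forall>w. admissible \<nu> w)"
    by (rule bernoulli_if_dfa_selection_preserves_genericity)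
next
  assume "bernoulli_measure \<nu> \<and> (\<forall>w. admissible \<nu> w)"
  then show "dfa_selection_preserves_genericity \<nu>"
    unfolding dfa_selection_preserves_genericity_def
    by (blast intro: bernoulli_selection_preserves_genericity)
qed

end
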